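(* Let $\boldsymbol\psi$ be an admissible symbol. Then $B_{\boldsymbol\psi,\infty}(\mathbb{C})\subseteq H_{\mathbb{C}}(\infty)$ and the inclusion map $B_{\boldsymbol\psi,\infty}(\mathbb{C})\hookrightarrow H_{\mathbb{C}}(\infty)$ is continuous.
   Context: Notation as follows. $\|x\|_p=\max_i|x_i|_p$ on $\mathbb{Q}_p^n$; $d^nx$ Haar measure with $\int_{\mathbb{Z}_p^n}d^nx=1$; $\widehat f(\xi)=\int\chi_p(\xi\cdot x)f(x)d^nx$ with $\chi_p(y)=\exp(2\pi i\{y\}_p)$; $\mathcal{D}(\mathbb{Q}_p^n)$ the locally constant compactly supported complex functions. Negative definite, radial, type 1 and type 2 are as follows: $\psi$ negative definite if $\sum_{i,j}(\psi(x_i)+\overline{\psi(x_j)}-\psi(x_i-x_j))\lambda_i\overline{\lambda_j}\ge0$ for all finite families; radial if $\psi(\xi)$ depends only on $\|\xi\|_p$; type 1 if $C_0[\max\{1,\|\xi\|_p\}]^{\beta_0}\le\max\{1,|\psi(\|\xi\|_p)|\}\le C_1[\max\{1,\|\xi\|_p\}]^{\beta_1}$ for constants $C_0,C_1>0$, $0<\beta_0\le\beta_1$; type 2 if for all $\beta\ge1$ there is $C>0$ with $\max\{1,|\psi(\|\xi\|_p)|\}>C[\max\{1,\|\xi\|_p\}]^\beta$. An admissible symbol is a radial continuous negative definite $\boldsymbol\psi$ of type 1 or 2 with $0<\sup_{\xi\in\mathbb{Z}_p^n}|\boldsymbol\psi(\|\xi\|_p)|\le1$. For $l\in\mathbb{N}$,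 $\|\varphi\|^2_{\boldsymbol\psi,l}=\int[\max\{1,|\boldsymbol\psi(\|\xi\|_p)|\}]^l|\widehat\varphi(\xi)|^2d^n\xi$ on $\mathcal{D}$; $B_{\boldsymbol\psi,l}(\mathbb{C})$ the completion of $\mathcal{D}$ under this norm, $B_{\boldsymbol\psi,\infty}(\mathbb{C})=\bigcap_lB_{\boldsymbol\psi,l}(\mathbb{C})$ with the topology given by all the norms $\|\cdot\|_{\boldsymbol\psi,l}$ (metric $d_{\boldsymbol\psi}(f,g)=\max_l2^{-l}\|f-g\|_{\boldsymbol\psi,l}/(1+\|f-g\|_{\boldsymbol\psi,l})$). $H_{\mathbb{C}}(l)$ and $H_{\mathbb{C}}(\infty)$ denote the same spaces built with $\boldsymbol\psi(\xi)=\|\xi\|_p$, i.e. with norms $\|\varphi\|_l^2=\int[\max\{1,\|\xi\|_p\}]^l|\widehat\varphi(\xi)|^2d^n\xi$. *)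

theory Defs
  imports Complex_Main "HOL-Computational_Algebra.Primes"
begin

text \<open>An element of Q_p is represented by its p-adic digit expansion
  a = sum_i a(i) p^i, i.e. a function a :: int => nat with all digits < p
  and a(i) = 0 for all sufficiently negative i.  Q_p^n is represented by
  functions from a finite index type 'n into such digit expansions.\<close>

type_synonym padic = "int \<Rightarrow> nat"

definition padic :: "nat \<Rightarrow> padic \<Rightarrow> bool" where
  "padic p a \<longleftrightarrow> (\<forall>i. a i < p) \<and> (\<exists>N. \<forall>i<N. a i = 0)"

definition qpv :: "nat \<Rightarrow> ('n \<Rightarrow> padic) set" where
  "qpv p = {x. \<forall>j. padic p (x j)}"

text \<open>Value (as a real number, an element of Z[1/p]) of the truncation
  sum_{i<k} a(i) p^i, i.e. the canonical representative of a mod p^k Z_p.\<close>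
definition tval :: "nat \<Rightarrow> int \<Rightarrow> padic \<Rightarrow> real" where
  "tval p k a = (\<Sum>i\<in>{i. i < k \<and> a i \<noteq> 0}. real (a i) * real p powr real_of_int i)"

text \<open>Subtraction in Q_p: digit i of a - b is determined by a - b mod p^(i+1).\<close>
definition psub :: "nat \<Rightarrow> padic \<Rightarrow> padic \<Rightarrow> padic" where
  "psub p a b = (\<lambda>i. nat (\<lfloor>(tval p (i + 1) a - tval p (i + 1) b) / real p powr real_of_int i\<rfloor>
                           mod int p))"

definition vsub :: "nat \<Rightarrow> ('n \<Rightarrow> padic) \<Rightarrow> ('n \<Rightarrow> padic) \<Rightarrow> ('n \<Rightarrow> padic)" where
  "vsub p x y = (\<lambda>j. psub p (x j) (y j))"

definition pnorm :: "nat \<Rightarrow> padic \<Rightarrow> real" where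
  "pnorm p a = (if \<forall>i. a i = 0 then 0
               else real p powr (- real_of_int (LEAST i. a i \<noteq> 0)))"

definition vnorm :: "nat \<Rightarrow> ('n::finite \<Rightarrow> padic) \<Rightarrow> real" where
  "vnorm p x = Max (range (\<lambda>j. pnorm p (x j)))"

text \<open>The additive character chi_p(xi . x) = exp(2 pi i {xi . x}_p).  For N large,
  xi . x differs from the element r = sum_j tval N (xi j) * tval N (x j) of Z[1/p]
  by an element of Z_p, hence {xi . x}_p = r mod 1 and the sequence below is
  eventually constant equal to chi_p(xi . x).\<close>
definition chi :: "nat \<Rightarrow> ('n::finite \<Rightarrow> padic) \<Rightarrow> ('n \<Rightarrow> padic) \<Rightarrow> complex" where
  "chi p \<xi> x = lim (\<lambda>N::nat. cis (2 * pi *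
       (\<Sum>j\<in>UNIV. tval p (int N) (\<xi> j) * tval p (int N) (x j))))"

text \<open>Representatives of p^(-k) Z_p^n / p^k Z_p^n.\<close>
definition reps :: "nat \<Rightarrow> nat \<Rightarrow> ('n \<Rightarrow> padic) set" where
  "reps p k = {x \<in> qpv p. \<forall>j i. (i < - int k \<or> int k \<le> i) \<longrightarrow> x j i = 0}"

text \<open>Haar integral (normalised by vol(Z_p^n) = 1) as the limit of Riemann sums
  over the cosets of p^k Z_p^n inside p^(-k) Z_p^n (each of volume p^(-kn)).
  For locally constant compactly supported integrands the sequence is
  eventually constant and equals the Haar integral.\<close>
definition haar_int :: "nat \<Rightarrow> (('n::finite \<Rightarrow> padic) \<Rightarrow> 'a::real_normed_vector) \<Rightarrow> 'a" where
  "haar_int p g = lim (\<lambda>k. (real p powr (- (real k * real (card (UNIV :: 'n set))))) *\<^sub>R (\<Sum>x\<in>reps p k. g x))"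

text \<open>The space D(Q_p^n): locally constant functions with compact (= bounded)
  support; by convention they vanish off the carrier.\<close>
definition dfun :: "nat \<Rightarrow> (('n::finite \<Rightarrow> padic) \<Rightarrow> complex) \<Rightarrow> bool" where
  "dfun p \<phi> \<longleftrightarrow> (\<forall>x. x \<notin> qpv p \<longrightarrow> \<phi> x = 0)
      \<and> (\<forall>x\<in>qpv p. \<exists>e>0. \<forall>y\<in>qpv p. vnorm p (vsub p y x) < e \<longrightarrow> \<phi> y = \<phi> x)
      \<and> (\<exists>R. \<forall>x\<in>qpv p. R < vnorm p x \<longrightarrow> \<phi> x = 0)"

definition hat :: "nat \<Rightarrow> (('n::finite \<Rightarrow> padic) \<Rightarrow> complex) \<Rightarrow> ('n \<Rightarrow> padic) \<Rightarrow> complex" where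
  "hat p \<phi> \<xi> = (if \<xi> \<in> qpv p then haar_int p (\<lambda>x. chi p \<xi> x * \<phi> x) else 0)"

definition radial :: "nat \<Rightarrow> (('n::finite \<Rightarrow> padic) \<Rightarrow> complex) \<Rightarrow> bool" where
  "radial p \<psi> \<longleftrightarrow> (\<forall>x\<in>qpv p. \<forall>y\<in>qpv p. vnorm p x = vnorm p y \<longrightarrow> \<psi> x = \<psi> y)"

definition pcontinuous :: "nat \<Rightarrow> (('n::finite \<Rightarrow> padic) \<Rightarrow> complex) \<Rightarrow> bool" where
  "pcontinuous p \<psi> \<longleftrightarrow> (\<forall>x\<in>qpv p. \<forall>e>0. \<exists>d>0. \<forall>y\<in>qpv p.
      vnorm p (vsub p y x) < d \<longrightarrow> cmod (\<psi> y - \<psi> x) < e)"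

definition negdef :: "nat \<Rightarrow> (('n::finite \<Rightarrow> padic) \<Rightarrow> complex) \<Rightarrow> bool" where
  "negdef p \<psi> \<longleftrightarrow> (\<forall>(m::nat) (x::nat \<Rightarrow> 'n \<Rightarrow> padic) (c::nat \<Rightarrow> complex).
      (\<forall>i<m. x i \<in> qpv p) \<longrightarrow>
      (let S = (\<Sum>i<m. \<Sum>j<m. (\<psi> (x i) + cnj (\<psi> (x j)) - \<psi> (vsub p (x i) (x j))) * c i * cnj (c j))
       in Im S = 0 \<and> 0 \<le> Re S))"

definition type1 :: "nat \<Rightarrow> (('n::finite \<Rightarrow> padic) \<Rightarrow> complex) \<Rightarrow> bool" where
  "type1 p \<psi> \<longleftrightarrow> (\<exists>C0 C1 b0 b1. 0 < C0 \<and> 0 < C1 \<and> 0 < b0 \<and> b0 \<le> b1 \<and>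
      (\<forall>\<xi>\<in>qpv p. C0 * max 1 (vnorm p \<xi>) powr b0 \<le> max 1 (cmod (\<psi> \<xi>))
                 \<and> max 1 (cmod (\<psi> \<xi>)) \<le> C1 * max 1 (vnorm p \<xi>) powr b1))"

definition type2 :: "nat \<Rightarrow> (('n::finite \<Rightarrow> padic) \<Rightarrow> complex) \<Rightarrow> bool" where
  "type2 p \<psi> \<longleftrightarrow> (\<forall>b::real. 1 \<le> b \<longrightarrow> (\<exists>C>0. \<forall>\<xi>\<in>qpv p.
      max 1 (cmod (\<psi> \<xi>)) > C * max 1 (vnorm p \<xi>) powr b))"

definition admissible :: "nat \<Rightarrow> (('n::finite \<Rightarrow> padic) \<Rightarrow> complex) \<Rightarrow> bool" where
  "admissible p \<psi> \<longleftrightarrow> radial p \<psi> \<and> pcontinuous p \<psi> \<and> negdef p \<psi> \<and> (type1 p \<psi> \<or> type2 p \<psi>)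
     \<and> (let S = (\<lambda>\<xi>. cmod (\<psi> \<xi>)) ` {\<xi> \<in> qpv p. vnorm p \<xi> \<le> 1}
        in bdd_above S \<and> 0 < Sup S \<and> Sup S \<le> 1)"

text \<open>Weighted norm ||phi||_{w,l}^2 = int max(1, w xi)^l |hat phi xi|^2 d xi.
  B_{psi,l} uses w = |psi|, H(l) uses w = ||.||_p.  For l = 0 this is the L^2 norm.\<close>
definition wnorm :: "nat \<Rightarrow> (('n::finite \<Rightarrow> padic) \<Rightarrow> real) \<Rightarrow> nat \<Rightarrow> (('n \<Rightarrow> padic) \<Rightarrow> complex) \<Rightarrow> real" where
  "wnorm p w l \<phi> = sqrt (haar_int p (\<lambda>\<xi>. (max 1 (w \<xi>)) ^ l * (cmod (hat p \<phi> \<xi>))\<^sup>2))"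

definition wcauchy :: "nat \<Rightarrow> (('n::finite \<Rightarrow> padic) \<Rightarrow> real) \<Rightarrow> nat \<Rightarrow> (nat \<Rightarrow> ('n \<Rightarrow> padic) \<Rightarrow> complex) \<Rightarrow> bool" where
  "wcauchy p w l s \<longleftrightarrow> (\<forall>k. dfun p (s k)) \<and>
     (\<forall>e>0. \<exists>N. \<forall>m\<ge>N. \<forall>k\<ge>N. wnorm p w l (s m - s k) < e)"

text \<open>Common ambient space: the L^2-completion of D, i.e. classes of L^2-Cauchy
  sequences of test functions modulo L^2-null sequences.  All B_{psi,l}, H(l)
  are realised inside it (as the paper does implicitly inside L^2).\<close>
definition cls :: "nat \<Rightarrow> (nat \<Rightarrow> ('n::finite \<Rightarrow> padic) \<Rightarrow> complex) \<Rightarrow> (nat \<Rightarrow> ('n \<Rightarrow> padic) \<Rightarrow> complex) set" where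
  "cls p s = {t. wcauchy p (\<lambda>_. 0) 0 t \<and> (\<lambda>k. wnorm p (\<lambda>_. 0) 0 (s k - t k)) \<longlonglongrightarrow> 0}"

definition Bsp :: "nat \<Rightarrow> (('n::finite \<Rightarrow> padic) \<Rightarrow> real) \<Rightarrow> nat \<Rightarrow> (nat \<Rightarrow> ('n \<Rightarrow> padic) \<Rightarrow> complex) set set" where
  "Bsp p w l = {cls p s | s. wcauchy p w l s}"

definition Binf :: "nat \<Rightarrow> (('n::finite \<Rightarrow> padic) \<Rightarrow> real) \<Rightarrow> (nat \<Rightarrow> ('n \<Rightarrow> padic) \<Rightarrow> complex) set set" where
  "Binf p w = (\<Inter>l. Bsp p w l)"

text \<open>||F - G||_{w,l} for F, G in the completion (extension by continuity).\<close>
definition cdist :: "nat \<Rightarrow> (('n::finite \<Rightarrow> padic) \<Rightarrow> real) \<Rightarrow> nat \<Rightarrow> (nat \<Rightarrow> ('n \<Rightarrow> padic) \<Rightarrow> complex) set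
                    \<Rightarrow> (nat \<Rightarrow> ('n \<Rightarrow> padic) \<Rightarrow> complex) set \<Rightarrow> real" where
  "cdist p w l F G = (THE r. \<exists>s\<in>F. \<exists>t\<in>G. wcauchy p w l s \<and> wcauchy p w l t \<and>
                         (\<lambda>k. wnorm p w l (s k - t k)) \<longlonglongrightarrow> r)"

definition fdist :: "nat \<Rightarrow> (('n::finite \<Rightarrow> padic) \<Rightarrow> real) \<Rightarrow> (nat \<Rightarrow> ('n \<Rightarrow> padic) \<Rightarrow> complex) set
                    \<Rightarrow> (nat \<Rightarrow> ('n \<Rightarrow> padic) \<Rightarrow> complex) set \<Rightarrow> real" where
  "fdist p w F G = (SUP l. (1/2) ^ l * cdist p w l F G / (1 + cdist p w l F G))"

end

theory Submission
  imports Defs "HOL-Analysis.Analysis"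
begin

text \<open>The weights are compared pointwise: for an admissible \<psi> and every l there are m and C with
  max(1, \<parallel>\<xi>\<parallel>_p)^l \<le> C max(1, |\<psi>(\<xi>)|)^m (type 1: m \<approx> l/\<beta>_0; type 2: m = 1).
  Test functions and their Fourier transforms are cylinder functions, supported in some
  p^(-K) \<int>_p^n and constant modulo p^K \<int>_p^n, so the weighted norms are finite sums and the
  pointwise bound gives \<parallel>\<phi>\<parallel>_l \<le> \<surd>C \<parallel>\<phi>\<parallel>_(\<psi>,m).  This estimate passes to Cauchy
  sequences and to the distances in the completions, which yields the inclusion; continuity for the
  Fr\'echet metrics follows by treating finitely many seminorms individually and bounding the
  rest by 2^(-l).\<close>

lemma lowest_nonzero_digit:
  fixes a :: "int \<Rightarrow> nat"
  assumes "\<forall>j<N. a j = 0" "a i \<noteq> 0"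
  obtains m where "a m \<noteq> 0" "\<forall>j<m. a j = 0" "m \<le> i"
proof -
  have "N \<le> i" using assms by (meson not_le)
  hence ex: "\<exists>n. a (N + int n) \<noteq> 0" using assms(2) by (intro exI[of _ "nat (i - N)"]) auto
  define n where "n = (LEAST n. a (N + int n) \<noteq> 0)"
  have n: "a (N + int n) \<noteq> 0" unfolding n_def by (rule LeastI_ex[OF ex])
  have below: "a j = 0" if "j < N + int n" for j
  proof (cases "j < N")
    case False
    hence "j = N + int (nat (j - N))" by simp
    moreover have "nat (j - N) < n" using False that by linarith
    ultimately show ?thesis using not_less_Least[of "nat (j - N)" "\<lambda>n. a (N + int n) \<noteq> 0"]
      unfolding n_def by metis
  qed (use assms in auto)
  have "N + int n \<le> i" using below assms(2) by (meson not_le)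
  with n below show thesis by (intro that) auto
qed

lemma pnorm_eq_lowest_digit:
  assumes "a m \<noteq> 0" "\<forall>j<m. a j = 0"
  shows "pnorm p a = real p powr (- real_of_int m)"
proof -
  have "(LEAST i. a i \<noteq> 0) = m"
    by (rule Least_equality) (use assms in \<open>auto intro: leI\<close>)
  thus ?thesis using assms unfolding pnorm_def by auto
qed

lemma pnorm_le_powr:
  assumes "\<forall>i<L. a i = 0" "1 \<le> p"
  shows "pnorm p a \<le> real p powr (- real_of_int L)"
proof (cases "\<forall>i. a i = 0")
  case True thus ?thesis unfolding pnorm_def by auto
next
  case False
  then obtain i where "a i \<noteq> 0" by auto
  then obtain m where m: "a m \<noteq> 0" "\<forall>j<m. a j = 0" "m \<le> i"
    using lowest_nonzero_digit[OF assms(1)] by blast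
  have "L \<le> m" using m(1) assms(1) by (meson not_le)
  thus ?thesis
    unfolding pnorm_eq_lowest_digit[OF m(1,2)] using assms(2) by (intro powr_mono) auto
qed

lemma powr_le_pnorm:
  assumes "padic p a" "a i \<noteq> 0" "1 \<le> p"
  shows "real p powr (- real_of_int i) \<le> pnorm p a"
proof -
  obtain N where "\<forall>j<N. a j = 0" using assms(1) unfolding padic_def by auto
  then obtain m where m: "a m \<noteq> 0" "\<forall>j<m. a j = 0" "m \<le> i"
    using lowest_nonzero_digit assms(2) by blast
  show ?thesis
    unfolding pnorm_eq_lowest_digit[OF m(1,2)] using m(3) assms(3) by (intro powr_mono) auto
qed

lemma pnorm_le_vnorm: "pnorm p (x j) \<le> vnorm p (x::'n::finite \<Rightarrow> padic)"
  unfolding vnorm_def by (rule Max_ge) auto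

lemma vnorm_le: "(\<And>j. pnorm p (x j) \<le> c) \<Longrightarrow> vnorm p (x::'n::finite \<Rightarrow> padic) \<le> c"
  unfolding vnorm_def by (subst Max_le_iff) auto

lemma tval_cong: "(\<And>i. i < k \<Longrightarrow> a i = b i) \<Longrightarrow> tval p k a = tval p k b"
proof -
  assume h: "\<And>i. i < k \<Longrightarrow> a i = b i"
  have "{i. i < k \<and> a i \<noteq> 0} = {i. i < k \<and> b i \<noteq> 0}" using h by auto
  thus ?thesis unfolding tval_def using h by (intro sum.cong) auto
qed

lemma tval_eq_sum:
  assumes "\<forall>i<lo. a i = 0"
  shows "tval p k a = (\<Sum>i\<in>{lo..<k}. real (a i) * real p powr real_of_int i)"
  unfolding tval_def
proof (rule sum.mono_neutral_cong_left)
  show "{i. i < k \<and> a i \<noteq> 0} \<subseteq> {lo..<k}"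
    using assms by (auto simp: not_less[symmetric])
qed auto

lemma tval_diff_eq_sum:
  assumes "\<forall>i<lo. a i = 0" "k \<le> k'"
  shows "tval p k' a - tval p k a = (\<Sum>i\<in>{k..<k'}. real (a i) * real p powr real_of_int i)"
proof -
  let ?lo = "min lo k"
  have z: "\<forall>i<?lo. a i = 0" using assms by auto
  have "tval p k' a = (\<Sum>i\<in>{?lo..<k}. real (a i) * real p powr real_of_int i) +
                     (\<Sum>i\<in>{k..<k'}. real (a i) * real p powr real_of_int i)"
    unfolding tval_eq_sum[OF z] using assms
    by (subst sum.union_disjoint[symmetric]) (auto intro!: sum.cong)
  thus ?thesis unfolding tval_eq_sum[OF z, of p k] by simp
qed

definition in_pZ :: "nat \<Rightarrow> int \<Rightarrow> real \<Rightarrow> bool" where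
  "in_pZ p k v \<longleftrightarrow> v / real p powr real_of_int k \<in> \<int>"

lemma in_pZ_add: "in_pZ p k v \<Longrightarrow> in_pZ p k w \<Longrightarrow> in_pZ p k (v + w)"
  unfolding in_pZ_def by (simp add: add_divide_distrib)

lemma in_pZ_sum: "(\<And>i. i \<in> A \<Longrightarrow> in_pZ p k (f i)) \<Longrightarrow> in_pZ p k (\<Sum>i\<in>A. f i)"
  unfolding in_pZ_def sum_divide_distrib by (rule Ints_sum)

lemma in_pZ_mult:
  assumes "0 < p" "in_pZ p k v" "in_pZ p k' w"
  shows "in_pZ p (k + k') (v * w)"
proof -
  have "v * w / real p powr real_of_int (k + k') =
        (v / real p powr real_of_int k) * (w / real p powr real_of_int k')"
    using assms by (simp add: powr_add)
  thus ?thesis using assms unfolding in_pZ_def by (simp only:) (rule Ints_mult)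
qed

lemma powr_of_int_Ints:
  assumes "0 < p" "0 \<le> d"
  shows "real p powr real_of_int d \<in> \<int>"
  using assms by (simp add: powr_real_of_int)

lemma in_pZ_mono:
  assumes "0 < p" "in_pZ p k v" "k' \<le> k"
  shows "in_pZ p k' v"
proof -
  have "v / real p powr real_of_int k' =
        (v / real p powr real_of_int k) * real p powr real_of_int (k - k')"
    using assms by (simp add: powr_diff)
  thus ?thesis using assms powr_of_int_Ints[of p "k - k'"] unfolding in_pZ_def
    by (simp only:) (rule Ints_mult, auto)
qed

lemma in_pZ_digit:
  assumes "0 < p" "k \<le> i"
  shows "in_pZ p k (real c * real p powr real_of_int i)"
proof -
  have "real c * real p powr real_of_int i / real p powr real_of_int k =
        real c * real p powr real_of_int (i - k)"
    using assms by (simp add: powr_diff)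
  thus ?thesis using assms powr_of_int_Ints[of p "i - k"] unfolding in_pZ_def by simp
qed

lemma cis_add_in_pZ_0:
  assumes "0 < p" "in_pZ p 0 v"
  shows "cis (2 * pi * (u + v)) = cis (2 * pi * u)"
proof -
  have "v \<in> \<int>" using assms unfolding in_pZ_def by simp
  hence "cis (2 * pi * v) = 1" by (rule cis_multiple_2pi)
  thus ?thesis by (simp add: cis_mult[symmetric] distrib_left)
qed

lemma tval_in_pZ:
  assumes "0 < p" "\<forall>i<lo. a i = 0"
  shows "in_pZ p lo (tval p k a)"
  unfolding tval_eq_sum[OF assms(2)] by (rule in_pZ_sum, rule in_pZ_digit) (use assms in auto)

lemma tval_diff_in_pZ:
  assumes "0 < p" "\<forall>i<lo. a i = 0" "k \<le> k'"
  shows "in_pZ p k (tval p k' a - tval p k a)"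
  unfolding tval_diff_eq_sum[OF assms(2,3)] by (intro in_pZ_sum in_pZ_digit) (use assms in auto)

text \<open>pball K is the ball p^(-K) \<int>_p^n, and ptrunc K x the representative of x mod p^K \<int>_p^n
  whose digits of index \<ge> K vanish.\<close>

definition pball :: "nat \<Rightarrow> ('n \<Rightarrow> padic) set" where
  "pball K = {x. \<forall>j i. i < - int K \<longrightarrow> x j i = 0}"

definition ptrunc :: "nat \<Rightarrow> ('n \<Rightarrow> padic) \<Rightarrow> ('n \<Rightarrow> padic)" where
  "ptrunc K x = (\<lambda>j i. if i < int K then x j i else 0)"

lemma pball_mono: "x \<in> pball M \<Longrightarrow> M \<le> M' \<Longrightarrow> x \<in> pball M'"
  unfolding pball_def by auto

lemma ptrunc_in_pball: "x \<in> pball M \<Longrightarrow> ptrunc K x \<in> pball M"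
  unfolding pball_def ptrunc_def by auto

lemma ptrunc_in_qpv: "x \<in> qpv p \<Longrightarrow> ptrunc K x \<in> qpv p"
proof -
  assume "x \<in> qpv p"
  hence h: "\<forall>j. (\<forall>i. x j i < p) \<and> (\<exists>N. \<forall>i<N. x j i = 0)" unfolding qpv_def padic_def by auto
  have "0 < p" using h by (metis not_less0 gr0I)
  show ?thesis unfolding qpv_def padic_def ptrunc_def using h \<open>0<p\<close> by fastforce
qed

lemma pball_digits: "x \<in> pball M \<Longrightarrow> \<forall>i < - int M. x j i = 0"
  unfolding pball_def by auto

lemma ptrunc_ptrunc: "K \<le> K' \<Longrightarrow> ptrunc K (ptrunc K' x) = ptrunc K x"
  unfolding ptrunc_def by (auto simp: fun_eq_iff)

lemma ptrunc_in_pball_iff: "ptrunc K' x \<in> pball K \<longleftrightarrow> x \<in> pball K"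
proof -
  have "\<forall>j i. i < - int K \<longrightarrow> ptrunc K' x j i = x j i" unfolding ptrunc_def by auto
  thus ?thesis unfolding pball_def by auto
qed

lemma qpv_in_pball:
  fixes x :: "'n::finite \<Rightarrow> padic"
  assumes "x \<in> qpv p"
  obtains M where "x \<in> pball M"
proof -
  have "\<forall>j. \<exists>N. \<forall>i<N. x j i = 0" using assms unfolding qpv_def padic_def by auto
  then obtain N where N: "\<And>j. \<forall>i<N j. x j i = 0" by metis
  have "x \<in> pball (nat (Max (range (\<lambda>j. - N j))))" unfolding pball_def
  proof (intro CollectI allI impI)
    fix j i assume i: "i < - int (nat (Max (range (\<lambda>j. - N j))))"
    have "- N j \<le> Max (range (\<lambda>j. - N j))" by (rule Max_ge) auto
    hence "i < N j" using i by linarith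
    thus "x j i = 0" using N by auto
  qed
  thus thesis by (rule that)
qed

definition tdot :: "nat \<Rightarrow> nat \<Rightarrow> ('n::finite \<Rightarrow> padic) \<Rightarrow> ('n \<Rightarrow> padic) \<Rightarrow> real" where
  "tdot p N \<xi> x = (\<Sum>j\<in>UNIV. tval p (int N) (\<xi> j) * tval p (int N) (x j))"

lemma tdot_diff_in_pZ:
  assumes "0 < p" "\<xi> \<in> pball M1" "x \<in> pball M2" "max M1 M2 \<le> N" "N \<le> N'"
  shows "in_pZ p 0 (tdot p N' \<xi> x - tdot p N \<xi> x)"
proof -
  have "tdot p N' \<xi> x - tdot p N \<xi> x = (\<Sum>j\<in>UNIV.
      (tval p (int N') (\<xi> j) - tval p (int N) (\<xi> j)) * tval p (int N') (x j) +
      tval p (int N) (\<xi> j) * (tval p (int N') (x j) - tval p (int N) (x j)))"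
    unfolding tdot_def sum_subtractf[symmetric] by (intro sum.cong) (auto simp: algebra_simps)
  also have "in_pZ p 0 \<dots>"
  proof (intro in_pZ_sum in_pZ_add)
    fix j :: 'a
    have a1: "in_pZ p (int N) (tval p (int N') (\<xi> j) - tval p (int N) (\<xi> j))"
      by (rule tval_diff_in_pZ[OF assms(1) pball_digits[OF assms(2)]]) (use assms in auto)
    have a2: "in_pZ p (- int M2) (tval p (int N') (x j))"
      by (rule tval_in_pZ[OF assms(1) pball_digits[OF assms(3)]])
    show "in_pZ p 0 ((tval p (int N') (\<xi> j) - tval p (int N) (\<xi> j)) * tval p (int N') (x j))"
      using in_pZ_mult[OF assms(1) a1 a2] by (rule in_pZ_mono[OF assms(1)]) (use assms in auto)
    have b1: "in_pZ p (int N) (tval p (int N') (x j) - tval p (int N) (x j))"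
      by (rule tval_diff_in_pZ[OF assms(1) pball_digits[OF assms(3)]]) (use assms in auto)
    have b2: "in_pZ p (- int M1) (tval p (int N) (\<xi> j))"
      by (rule tval_in_pZ[OF assms(1) pball_digits[OF assms(2)]])
    show "in_pZ p 0 (tval p (int N) (\<xi> j) * (tval p (int N') (x j) - tval p (int N) (x j)))"
      using in_pZ_mult[OF assms(1) b2 b1] by (rule in_pZ_mono[OF assms(1)]) (use assms in auto)
  qed
  finally show ?thesis .
qed

lemma chi_eq_tdot:
  assumes "0 < p" "\<xi> \<in> pball M1" "x \<in> pball M2" "max M1 M2 \<le> N"
  shows "chi p \<xi> x = cis (2 * pi * tdot p N \<xi> x)"
proof -
  have ev: "eventually (\<lambda>N'. cis (2 * pi * tdot p N' \<xi> x) = cis (2 * pi * tdot p N \<xi> x)) sequentially"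
    unfolding eventually_sequentially
  proof (intro exI allI impI)
    fix N' assume "N \<le> N'"
    have "cis (2 * pi * (tdot p N \<xi> x + (tdot p N' \<xi> x - tdot p N \<xi> x))) = cis (2 * pi * tdot p N \<xi> x)"
      by (rule cis_add_in_pZ_0[OF assms(1) tdot_diff_in_pZ[OF assms \<open>N \<le> N'\<close>]])
    thus "cis (2 * pi * tdot p N' \<xi> x) = cis (2 * pi * tdot p N \<xi> x)" by simp
  qed
  have "(\<lambda>N'. cis (2 * pi * tdot p N' \<xi> x)) \<longlonglongrightarrow> cis (2 * pi * tdot p N \<xi> x)"
    by (rule tendsto_eventually[OF ev])
  hence "lim (\<lambda>N'. cis (2 * pi * tdot p N' \<xi> x)) = cis (2 * pi * tdot p N \<xi> x)" by (rule limI)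
  thus ?thesis unfolding chi_def tdot_def .
qed

lemma chi_eq_if_tdot_diff_in_pZ:
  assumes "0 < p" "\<xi> \<in> pball M1" "x \<in> pball M2" "\<xi>' \<in> pball M1" "x' \<in> pball M2" "max M1 M2 \<le> N"
    and "in_pZ p 0 (tdot p N \<xi> x - tdot p N \<xi>' x')"
  shows "chi p \<xi> x = chi p \<xi>' x'"
proof -
  have "chi p \<xi> x = cis (2 * pi * (tdot p N \<xi>' x' + (tdot p N \<xi> x - tdot p N \<xi>' x')))"
    using chi_eq_tdot[OF assms(1,2,3,6)] by simp
  also have "\<dots> = cis (2 * pi * tdot p N \<xi>' x')" by (rule cis_add_in_pZ_0[OF assms(1,7)])
  also have "\<dots> = chi p \<xi>' x'" using chi_eq_tdot[OF assms(1,4,5,6)] by simp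
  finally show ?thesis .
qed

lemma tval_truncated:
  assumes "\<forall>i<lo. a i = 0" "K \<le> k"
  shows "tval p k (\<lambda>i. if i < K then a i else 0) = tval p K a"
proof -
  have z: "\<forall>i<lo. (\<lambda>i. if i < K then a i else 0) i = 0" using assms by auto
  have "tval p k (\<lambda>i. if i < K then a i else 0) - tval p K (\<lambda>i. if i < K then a i else 0) = 0"
    unfolding tval_diff_eq_sum[OF z assms(2)] by (intro sum.neutral) auto
  moreover have "tval p K (\<lambda>i. if i < K then a i else 0) = tval p K a" by (rule tval_cong) auto
  ultimately show ?thesis by simp
qed

lemma chi_ptrunc_right:
  assumes "0 < p" "\<xi> \<in> pball M" "x \<in> pball M2" "M \<le> K"
  shows "chi p \<xi> x = chi p \<xi> (ptrunc K x)"
proof (rule chi_eq_if_tdot_diff_in_pZ[OF assms(1,2,3,2) ptrunc_in_pball[OF assms(3)]])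
  let ?N = "max (max M M2) K"
  show "max M M2 \<le> ?N" by simp
  have "tdot p ?N \<xi> x - tdot p ?N \<xi> (ptrunc K x) =
    (\<Sum>j\<in>UNIV. tval p (int ?N) (\<xi> j) * (tval p (int ?N) (x j) - tval p (int K) (x j)))"
    unfolding tdot_def sum_subtractf[symmetric]
  proof (intro sum.cong refl)
    fix j
    have "tval p (int ?N) (ptrunc K x j) = tval p (int K) (x j)"
      unfolding ptrunc_def by (rule tval_truncated[OF pball_digits[OF assms(3)]]) auto
    thus "tval p (int ?N) (\<xi> j) * tval p (int ?N) (x j) - tval p (int ?N) (\<xi> j) * tval p (int ?N) (ptrunc K x j) =
      tval p (int ?N) (\<xi> j) * (tval p (int ?N) (x j) - tval p (int K) (x j))"
      by (simp add: algebra_simps)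
  qed
  also have "in_pZ p 0 \<dots>"
  proof (intro in_pZ_sum)
    fix j :: 'a
    have b1: "in_pZ p (int K) (tval p (int ?N) (x j) - tval p (int K) (x j))"
      by (rule tval_diff_in_pZ[OF assms(1) pball_digits[OF assms(3)]]) auto
    have b2: "in_pZ p (- int M) (tval p (int ?N) (\<xi> j))"
      by (rule tval_in_pZ[OF assms(1) pball_digits[OF assms(2)]])
    show "in_pZ p 0 (tval p (int ?N) (\<xi> j) * (tval p (int ?N) (x j) - tval p (int K) (x j)))"
      using in_pZ_mult[OF assms(1) b2 b1] by (rule in_pZ_mono[OF assms(1)]) (use assms in auto)
  qed
  finally show "in_pZ p 0 (tdot p ?N \<xi> x - tdot p ?N \<xi> (ptrunc K x))" .
qed

lemma chi_ptrunc_left: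
  assumes "0 < p" "\<xi> \<in> pball M1" "x \<in> pball K"
  shows "chi p \<xi> x = chi p (ptrunc K \<xi>) x"
proof (rule chi_eq_if_tdot_diff_in_pZ[OF assms(1,2,3) ptrunc_in_pball[OF assms(2)] assms(3)])
  let ?N = "max M1 K"
  show "max M1 K \<le> ?N" by simp
  have "tdot p ?N \<xi> x - tdot p ?N (ptrunc K \<xi>) x =
    (\<Sum>j\<in>UNIV. (tval p (int ?N) (\<xi> j) - tval p (int K) (\<xi> j)) * tval p (int ?N) (x j))"
    unfolding tdot_def sum_subtractf[symmetric]
  proof (intro sum.cong refl)
    fix j
    have "tval p (int ?N) (ptrunc K \<xi> j) = tval p (int K) (\<xi> j)"
      unfolding ptrunc_def by (rule tval_truncated[OF pball_digits[OF assms(2)]]) auto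
    thus "tval p (int ?N) (\<xi> j) * tval p (int ?N) (x j) - tval p (int ?N) (ptrunc K \<xi> j) * tval p (int ?N) (x j) =
      (tval p (int ?N) (\<xi> j) - tval p (int K) (\<xi> j)) * tval p (int ?N) (x j)"
      by (simp add: algebra_simps)
  qed
  also have "in_pZ p 0 \<dots>"
  proof (intro in_pZ_sum)
    fix j :: 'a
    have b1: "in_pZ p (int K) (tval p (int ?N) (\<xi> j) - tval p (int K) (\<xi> j))"
      by (rule tval_diff_in_pZ[OF assms(1) pball_digits[OF assms(2)]]) auto
    have b2: "in_pZ p (- int K) (tval p (int ?N) (x j))"
      by (rule tval_in_pZ[OF assms(1) pball_digits[OF assms(3)]])
    show "in_pZ p 0 ((tval p (int ?N) (\<xi> j) - tval p (int K) (\<xi> j)) * tval p (int ?N) (x j))"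
      using in_pZ_mult[OF assms(1) b1 b2] by simp
  qed
  finally show "in_pZ p 0 (tdot p ?N \<xi> x - tdot p ?N (ptrunc K \<xi>) x)" .
qed

section \<open>Cylinder functions and the Haar integral\<close>

definition cylinder :: "nat \<Rightarrow> nat \<Rightarrow> (('n \<Rightarrow> padic) \<Rightarrow> 'a::zero) \<Rightarrow> bool" where
  "cylinder p K g \<longleftrightarrow> (\<forall>x\<in>qpv p. g x = (if x \<in> pball K then g (ptrunc K x) else 0))"

lemma cylinder_mono:
  fixes g :: "('n \<Rightarrow> padic) \<Rightarrow> 'a::zero"
  assumes "cylinder p K g" "K \<le> K'"
  shows "cylinder p K' g"
  unfolding cylinder_def
proof
  fix x :: "'n \<Rightarrow> padic" assume x: "x \<in> qpv p"
  have tq: "ptrunc K' x \<in> qpv p" by (rule ptrunc_in_qpv[OF x])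
  show "g x = (if x \<in> pball K' then g (ptrunc K' x) else 0)"
  proof (cases "x \<in> pball K")
    case True
    hence "g x = g (ptrunc K x)" using assms x unfolding cylinder_def by auto
    moreover have "g (ptrunc K' x) = g (ptrunc K x)"
      using assms(1) tq True ptrunc_in_pball_iff[of K' x K] ptrunc_ptrunc[OF assms(2), of x]
      unfolding cylinder_def by auto
    moreover have "x \<in> pball K'" using True pball_mono assms by blast
    ultimately show ?thesis by simp
  next
    case False
    hence "g x = 0" using assms x unfolding cylinder_def by auto
    moreover have "g (ptrunc K' x) = 0"
      using assms(1) tq False ptrunc_in_pball_iff[of K' x K] unfolding cylinder_def by auto
    ultimately show ?thesis by simp
  qed
qed

lemma reps_qpv: "reps p k \<subseteq> qpv p"
  unfolding reps_def by auto

lemma finite_reps: "finite (reps p k :: ('n::finite \<Rightarrow> padic) set)"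
proof -
  let ?I = "(UNIV :: 'n set) \<times> {- int k..<int k}"
  let ?h = "\<lambda>d::('n \<times> int) \<Rightarrow> nat. \<lambda>j i. if - int k \<le> i \<and> i < int k then d (j, i) else 0"
  have "reps p k \<subseteq> ?h ` (PiE ?I (\<lambda>_. {..<p}))"
  proof
    fix x :: "'n \<Rightarrow> padic" assume x: "x \<in> reps p k"
    have "x = ?h (restrict (\<lambda>(j, i). x j i) ?I)"
    proof (intro ext)
      fix j i
      show "x j i = ?h (restrict (\<lambda>(j, i). x j i) ?I) j i"
        using x unfolding reps_def by (cases "- int k \<le> i \<and> i < int k") auto
    qed
    moreover have "restrict (\<lambda>(j, i). x j i) ?I \<in> PiE ?I (\<lambda>_. {..<p})"
      using x unfolding reps_def qpv_def padic_def by (auto simp: PiE_iff)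
    ultimately show "x \<in> ?h ` (PiE ?I (\<lambda>_. {..<p}))" by blast
  qed
  moreover have "finite (PiE ?I (\<lambda>_. {..<p}))" by (intro finite_PiE) auto
  ultimately show ?thesis using finite_subset finite_imageI by blast
qed

definition glue_digits :: "nat \<Rightarrow> nat \<Rightarrow> ('n \<Rightarrow> padic) \<Rightarrow> ('n \<times> int \<Rightarrow> nat) \<Rightarrow> ('n \<Rightarrow> padic)" where
  "glue_digits K k y d = (\<lambda>j i. if i < int K then y j i else if i < int k then d (j, i) else 0)"

lemma glue_digits_in_fibre:
  assumes y: "y \<in> reps p K" and "K \<le> k" and d: "d \<in> PiE (UNIV \<times> {int K..<int k}) (\<lambda>_. {..<p})"
  shows "glue_digits K k y d \<in> {x \<in> reps p k \<inter> pball K. ptrunc K x = y}"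
proof -
  let ?z = "glue_digits K k y d"
  have yp: "\<forall>j i. y j i < p" and yz: "\<forall>j i. (i < - int K \<or> int K \<le> i) \<longrightarrow> y j i = 0"
    using y unfolding reps_def qpv_def padic_def by auto
  have "0 < p" using yp by (metis not_less0 gr0I)
  have "\<forall>j i. ?z j i < p"
    using yp d \<open>0 < p\<close> by (auto simp: glue_digits_def PiE_iff)
  moreover have "\<forall>j i. i < - int K \<longrightarrow> ?z j i = 0"
    using yz by (auto simp: glue_digits_def)
  moreover have "\<forall>j i. int k \<le> i \<longrightarrow> ?z j i = 0"
    using \<open>K \<le> k\<close> by (auto simp: glue_digits_def)
  moreover have "ptrunc K ?z = y"
    using yz by (auto simp: glue_digits_def ptrunc_def fun_eq_iff)
  ultimately show ?thesis
    using \<open>K \<le> k\<close> unfolding reps_def qpv_def padic_def pball_def by force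
qed

lemma glue_digits_restrict:
  assumes "x \<in> reps p k" "ptrunc K x = y" "K \<le> k"
  shows "glue_digits K k y (restrict (\<lambda>(j, i). x j i) (UNIV \<times> {int K..<int k})) = x"
proof (intro ext)
  fix j i
  have "x j i = y j i" if "i < int K"
    using fun_cong[OF fun_cong[OF assms(2), of j], of i] that unfolding ptrunc_def by simp
  moreover have "x j i = 0" if "int k \<le> i" using assms(1) that unfolding reps_def by auto
  ultimately show "glue_digits K k y (restrict (\<lambda>(j, i). x j i) (UNIV \<times> {int K..<int k})) j i = x j i"
    using assms(3) unfolding glue_digits_def by auto
qed

lemma card_ptrunc_fibre:
  fixes y :: "'n::finite \<Rightarrow> padic"
  assumes y: "y \<in> reps p K" and Kk: "K \<le> k"
  shows "card {x \<in> reps p k \<inter> pball K. ptrunc K x = y} = p ^ (CARD('n) * (k - K))"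
proof -
  let ?F = "{x \<in> reps p k \<inter> pball K. ptrunc K x = y}"
  let ?I = "(UNIV :: 'n set) \<times> {int K..<int k}"
  let ?P = "PiE ?I (\<lambda>_. {..<p})"
  let ?f = "\<lambda>x::'n \<Rightarrow> padic. restrict (\<lambda>(j, i). x j i) ?I"
  have "bij_betw ?f ?F ?P"
  proof (rule bij_betw_byWitness[where f'="glue_digits K k y"])
    show "\<forall>x\<in>?F. glue_digits K k y (?f x) = x"
      using glue_digits_restrict[OF _ _ Kk] by blast
    show "\<forall>d\<in>?P. ?f (glue_digits K k y d) = d"
    proof
      fix d assume d: "d \<in> ?P"
      show "?f (glue_digits K k y d) = d"
      proof
        fix ji :: "'n \<times> int"
        show "?f (glue_digits K k y d) ji = d ji"
          using PiE_arb[OF d, of ji] by (cases ji) (auto simp: glue_digits_def)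
      qed
    qed
    show "?f ` ?F \<subseteq> ?P"
    proof
      fix z assume "z \<in> ?f ` ?F"
      then obtain x where x: "x \<in> ?F" and z: "z = ?f x" by auto
      have "\<forall>j i. x j i < p" using x unfolding reps_def qpv_def padic_def by auto
      thus "z \<in> ?P" unfolding z by (auto simp: PiE_iff)
    qed
    show "glue_digits K k y ` ?P \<subseteq> ?F"
      using glue_digits_in_fibre[OF y Kk] by blast
  qed
  hence "card ?F = card ?P" by (rule bij_betw_same_card)
  also have "\<dots> = p ^ (CARD('n) * (k - K))"
    using Kk by (simp add: card_PiE card_cartesian_product nat_diff_distrib)
  finally show ?thesis .
qed

lemma ptrunc_in_reps: "x \<in> reps p k \<Longrightarrow> x \<in> pball K \<Longrightarrow> ptrunc K x \<in> reps p K"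
  using ptrunc_in_qpv[of x p K] unfolding reps_def pball_def ptrunc_def by auto

lemma sum_reps_cylinder:
  fixes g :: "('n::finite \<Rightarrow> padic) \<Rightarrow> 'a::real_vector"
  assumes "cylinder p K g" "K \<le> k"
  shows "(\<Sum>x\<in>reps p k. g x) = real (p ^ (CARD('n) * (k - K))) *\<^sub>R (\<Sum>y\<in>reps p K. g y)"
proof -
  let ?A = "reps p k \<inter> pball K :: ('n \<Rightarrow> padic) set"
  have "g x = 0" if "x \<in> reps p k - ?A" for x
  proof -
    have "x \<in> qpv p" "x \<notin> pball K" using that reps_qpv by auto
    thus ?thesis using assms(1) unfolding cylinder_def by auto
  qed
  hence "(\<Sum>x\<in>reps p k. g x) = (\<Sum>x\<in>?A. g x)"
    by (intro sum.mono_neutral_right finite_reps) auto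
  also have "\<dots> = (\<Sum>y\<in>reps p K. \<Sum>x\<in>{x \<in> ?A. ptrunc K x = y}. g x)"
    using ptrunc_in_reps finite_reps[of p k] by (intro sum.group[symmetric] finite_reps) auto
  also have "\<dots> = (\<Sum>y\<in>reps p K. real (p ^ (CARD('n) * (k - K))) *\<^sub>R g y)"
  proof (rule sum.cong[OF refl])
    fix y :: "'n \<Rightarrow> padic" assume y: "y \<in> reps p K"
    have "(\<Sum>x\<in>{x \<in> ?A. ptrunc K x = y}. g x) = (\<Sum>x\<in>{x \<in> ?A. ptrunc K x = y}. g y)"
    proof (intro sum.cong refl)
      fix x assume "x \<in> {x \<in> ?A. ptrunc K x = y}"
      hence "x \<in> qpv p" "x \<in> pball K" "ptrunc K x = y" using reps_qpv by auto
      thus "g x = g y" using assms(1) unfolding cylinder_def by auto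
    qed
    also have "\<dots> = real (card {x \<in> ?A. ptrunc K x = y}) *\<^sub>R g y" by (rule sum_constant_scaleR)
    finally show "(\<Sum>x\<in>{x \<in> ?A. ptrunc K x = y}. g x) = real (p ^ (CARD('n) * (k - K))) *\<^sub>R g y"
      using card_ptrunc_fibre[OF y assms(2)] by simp
  qed
  also have "\<dots> = real (p ^ (CARD('n) * (k - K))) *\<^sub>R (\<Sum>y\<in>reps p K. g y)"
    by (simp add: scaleR_sum_right)
  finally show ?thesis .
qed

definition riemann_sum :: "nat \<Rightarrow> nat \<Rightarrow> (('n::finite \<Rightarrow> padic) \<Rightarrow> 'a::real_normed_vector) \<Rightarrow> 'a" where
  "riemann_sum p K g = (real p powr (- (real K * real CARD('n)))) *\<^sub>R (\<Sum>x\<in>reps p K. g x)"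

lemma haar_int_cylinder:
  fixes g :: "('n::finite \<Rightarrow> padic) \<Rightarrow> 'a::real_normed_vector"
  assumes "0 < p" "cylinder p K g"
  shows "haar_int p g = riemann_sum p K g"
proof -
  have ev: "eventually (\<lambda>k. (real p powr (- (real k * real CARD('n)))) *\<^sub>R (\<Sum>x\<in>reps p k. g x) = riemann_sum p K g) sequentially"
    unfolding eventually_sequentially
  proof (intro exI allI impI)
    fix k assume "K \<le> k"
    have "(real p powr (- (real k * real CARD('n)))) * real (p ^ (CARD('n) * (k - K))) =
          real p powr (- (real K * real CARD('n)))"
    proof -
      have "real (p ^ (CARD('n) * (k - K))) = real p powr (real CARD('n) * (real k - real K))"
        using assms(1) \<open>K \<le> k\<close> by (simp add: powr_realpow[symmetric] of_nat_diff)
      moreover have e: "- (real k * real CARD('n)) + real CARD('n) * (real k - real K) = - (real K * real CARD('n))"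
        by (simp add: algebra_simps)
      moreover have "real p powr (- (real k * real CARD('n))) * real p powr (real CARD('n) * (real k - real K))
          = real p powr (- (real K * real CARD('n)))"
        by (simp only: powr_add[symmetric] e)
      ultimately show ?thesis by simp
    qed
    thus "(real p powr (- (real k * real CARD('n)))) *\<^sub>R (\<Sum>x\<in>reps p k. g x) = riemann_sum p K g"
      unfolding sum_reps_cylinder[OF assms(2) \<open>K \<le> k\<close>] riemann_sum_def by simp
  qed
  show ?thesis unfolding haar_int_def by (rule limI, rule tendsto_eventually[OF ev])
qed

lemma haar_cong:
  assumes "\<And>x. x \<in> qpv p \<Longrightarrow> g x = h x"
  shows "haar_int p g = haar_int p h"
proof -
  have "\<And>k. (\<Sum>x\<in>reps p k. g x) = (\<Sum>x\<in>reps p k. h x)"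
    using assms reps_qpv by (intro sum.cong) auto
  thus ?thesis unfolding haar_int_def by simp
qed

lemma cylinder_diff:
  fixes f g :: "('n \<Rightarrow> padic) \<Rightarrow> 'a::ab_group_add"
  assumes "cylinder p K f" "cylinder p K g"
  shows "cylinder p K (f - g)"
  using assms unfolding cylinder_def by auto

section \<open>Fourier transform of cylinder functions\<close>

lemma cylinder_chi_mult:
  fixes \<phi> :: "('n::finite \<Rightarrow> padic) \<Rightarrow> complex"
  assumes "0 < p" "cylinder p K \<phi>" "\<xi> \<in> pball M"
  shows "cylinder p (max K M) (\<lambda>x. chi p \<xi> x * \<phi> x)"
  unfolding cylinder_def
proof
  fix x :: "'n \<Rightarrow> padic" assume x: "x \<in> qpv p"
  have c: "cylinder p (max K M) \<phi>" by (rule cylinder_mono[OF assms(2)]) auto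
  show "chi p \<xi> x * \<phi> x = (if x \<in> pball (max K M) then chi p \<xi> (ptrunc (max K M) x) * \<phi> (ptrunc (max K M) x) else 0)"
  proof (cases "x \<in> pball (max K M)")
    case True
    have "chi p \<xi> x = chi p \<xi> (ptrunc (max K M) x)"
      by (rule chi_ptrunc_right[OF assms(1,3) True]) auto
    moreover have "\<phi> x = \<phi> (ptrunc (max K M) x)" using c x True unfolding cylinder_def by auto
    ultimately show ?thesis using True by simp
  next
    case False
    thus ?thesis using c x unfolding cylinder_def by auto
  qed
qed

lemma hat_eq_riemann_sum:
  fixes \<phi> :: "('n::finite \<Rightarrow> padic) \<Rightarrow> complex"
  assumes "0 < p" "cylinder p K \<phi>" "\<xi> \<in> qpv p" "\<xi> \<in> pball M" "max K M \<le> K'"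
  shows "hat p \<phi> \<xi> = riemann_sum p K' (\<lambda>x. chi p \<xi> x * \<phi> x)"
proof -
  have "cylinder p K' (\<lambda>x. chi p \<xi> x * \<phi> x)"
    by (rule cylinder_mono[OF cylinder_chi_mult[OF assms(1,2,4)] assms(5)])
  thus ?thesis unfolding hat_def using assms(3) haar_int_cylinder[OF assms(1)] by simp
qed

lemma hat_ptrunc:
  fixes \<phi> :: "('n::finite \<Rightarrow> padic) \<Rightarrow> complex"
  assumes "0 < p" "cylinder p K \<phi>" "\<xi> \<in> qpv p" "\<xi> \<in> pball K"
  shows "hat p \<phi> \<xi> = hat p \<phi> (ptrunc K \<xi>)"
proof -
  have "haar_int p (\<lambda>x. chi p \<xi> x * \<phi> x) = haar_int p (\<lambda>x. chi p (ptrunc K \<xi>) x * \<phi> x)"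
  proof (rule haar_cong)
    fix x :: "'n \<Rightarrow> padic" assume x: "x \<in> qpv p"
    show "chi p \<xi> x * \<phi> x = chi p (ptrunc K \<xi>) x * \<phi> x"
    proof (cases "x \<in> pball K")
      case True
      thus ?thesis using chi_ptrunc_left[OF assms(1,4) True] by simp
    next
      case False
      thus ?thesis using assms(2) x unfolding cylinder_def by auto
    qed
  qed
  thus ?thesis unfolding hat_def using assms(3) ptrunc_in_qpv[OF assms(3)] by simp
qed

lemma sum_root_of_unity_powers:
  assumes "0 < c" "c < p"
  shows "(\<Sum>d<p. cis (2 * pi * real c / real p) ^ d) = 0"
proof -
  let ?w = "cis (2 * pi * real c / real p)"
  have "?w \<noteq> 1"
  proof
    assume "?w = 1"
    hence "cos (2 * pi * real c / real p) = 1" by (metis Re_complex_of_real cis.sel(1) one_complex.sel(1))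
    then obtain z :: int where z: "2 * pi * real c / real p = real_of_int z * 2 * pi"
      using cos_one_2pi_int by blast
    hence h2: "(2 * pi) * (real c / real p) = (2 * pi) * real_of_int z"
      by (metis times_divide_eq_right mult.commute mult.assoc)
    have "(2::real) * pi \<noteq> 0" by simp
    hence "real c / real p = real_of_int z" using h2 by (rule mult_left_cancel[THEN iffD1])
    moreover have "0 < real c / real p" "real c / real p < 1" using assms by auto
    ultimately show False by (metis of_int_0_less_iff of_int_less_1_iff zero_less_one_class.zero_le_one not_le int_one_le_iff_zero_less)
  qed
  moreover have "?w ^ p = 1"
  proof -
    have "?w ^ p = cis (real p * (2 * pi * real c / real p))" by (rule Complex.DeMoivre)
    also have "\<dots> = cis (2 * pi * real c)" using assms by simp
    also have "\<dots> = 1" by (rule cis_multiple_2pi) simp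
    finally show ?thesis .
  qed
  ultimately show ?thesis by (simp add: geometric_sum)
qed

definition set_digit :: "'n \<Rightarrow> int \<Rightarrow> ('n \<Rightarrow> padic) \<Rightarrow> nat \<Rightarrow> ('n \<Rightarrow> padic)" where
  "set_digit j0 i1 x d = x(j0 := (x j0)(i1 := d))"

lemma tval_set_digit:
  assumes "a i1 = 0" "\<forall>i<lo. a i = 0" "lo \<le> i1" "i1 < N"
  shows "tval p N (a(i1 := d)) = tval p N a + real d * real p powr real_of_int i1"
proof -
  have z': "\<forall>i<lo. (a(i1 := d)) i = 0" using assms by auto
  have fin: "finite {lo..<N}" and mem: "i1 \<in> {lo..<N}" using assms by auto
  have "tval p N (a(i1 := d)) = real d * real p powr real_of_int i1 +
      (\<Sum>i\<in>{lo..<N} - {i1}. real ((a(i1 := d)) i) * real p powr real_of_int i)"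
    unfolding tval_eq_sum[OF z'] by (subst sum.remove[OF fin mem]) simp
  also have "(\<Sum>i\<in>{lo..<N} - {i1}. real ((a(i1 := d)) i) * real p powr real_of_int i) =
      (\<Sum>i\<in>{lo..<N} - {i1}. real (a i) * real p powr real_of_int i)"
    by (intro sum.cong) auto
  also have "\<dots> = tval p N a"
  proof -
    have "tval p N a = real (a i1) * real p powr real_of_int i1 +
       (\<Sum>i\<in>{lo..<N} - {i1}. real (a i) * real p powr real_of_int i)"
      unfolding tval_eq_sum[OF assms(2)] by (rule sum.remove[OF fin mem])
    thus ?thesis using assms(1) by simp
  qed
  finally show ?thesis by (simp add: fun_upd_def add.commute)
qed

lemma tdot_set_digit:
  fixes x :: "'n::finite \<Rightarrow> padic"
  assumes "x j0 i1 = 0" "\<forall>i<lo. x j0 i = 0" "lo \<le> i1" "i1 < int N"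
  shows "tdot p N \<xi> (set_digit j0 i1 x d) = tdot p N \<xi> x + tval p (int N) (\<xi> j0) * (real d * real p powr real_of_int i1)"
proof -
  have "tdot p N \<xi> (set_digit j0 i1 x d) = (\<Sum>j\<in>UNIV. tval p (int N) (\<xi> j) * tval p (int N) (x j) +
      (if j = j0 then tval p (int N) (\<xi> j) * (real d * real p powr real_of_int i1) else 0))"
    unfolding tdot_def set_digit_def
  proof (intro sum.cong refl)
    fix j
    show "tval p (int N) (\<xi> j) * tval p (int N) ((x(j0 := (x j0)(i1 := d))) j) =
      tval p (int N) (\<xi> j) * tval p (int N) (x j) +
      (if j = j0 then tval p (int N) (\<xi> j) * (real d * real p powr real_of_int i1) else 0)"
    proof (cases "j = j0")
      case True
      thus ?thesis using tval_set_digit[OF assms, of p d] by (simp add: algebra_simps)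
    qed simp
  qed
  also have "\<dots> = tdot p N \<xi> x + tval p (int N) (\<xi> j0) * (real d * real p powr real_of_int i1)"
    unfolding sum.distrib tdot_def by (simp add: sum.delta)
  finally show ?thesis .
qed

lemma tval_lowest_digit:
  assumes "0 < p" "\<forall>i<m. a i = 0" "m < N"
  shows "in_pZ p (m + 1) (tval p N a - real (a m) * real p powr real_of_int m)"
proof -
  have "tval p (m + 1) a = (\<Sum>i\<in>{m..<m+1}. real (a i) * real p powr real_of_int i)"
    by (rule tval_eq_sum[OF assms(2)])
  also have "{m..<m+1} = {m}" by auto
  finally have "tval p (m + 1) a = real (a m) * real p powr real_of_int m" by simp
  moreover have "in_pZ p (m + 1) (tval p N a - tval p (m + 1) a)"
    by (rule tval_diff_in_pZ[OF assms(1,2)]) (use assms in auto)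
  ultimately show ?thesis by simp
qed

lemma set_digit_in_reps:
  assumes "x \<in> reps p k" "d < p" "- int k \<le> i" "i < int k"
  shows "set_digit j i x d \<in> reps p k"
proof -
  have xp: "\<forall>j i. x j i < p" and xz: "\<forall>j i. (i < - int k \<or> int k \<le> i) \<longrightarrow> x j i = 0"
    using assms(1) unfolding reps_def qpv_def padic_def by auto
  have "\<forall>j' i'. set_digit j i x d j' i' < p"
    using xp assms(2) unfolding set_digit_def by auto
  moreover have "\<forall>j' i'. (i' < - int k \<or> int k \<le> i') \<longrightarrow> set_digit j i x d j' i' = 0"
    using xz assms(3,4) unfolding set_digit_def by auto
  ultimately show ?thesis unfolding reps_def qpv_def padic_def by blast
qed

lemma bij_betw_set_digit:
  assumes "0 < p" "- int k \<le> i" "i < int k"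
  shows "bij_betw (\<lambda>(x, d). set_digit j i x d) ({x \<in> reps p k. x j i = 0} \<times> {..<p}) (reps p k)"
    (is "bij_betw ?u ?A _")
proof (rule bij_betw_byWitness[where f'="\<lambda>x. (set_digit j i x 0, x j i)"])
  let ?v = "\<lambda>x. (set_digit j i x 0, x j i)"
  show "\<forall>a\<in>?A. ?v (?u a) = a" "\<forall>x\<in>reps p k. ?u (?v x) = x"
    by (auto simp: set_digit_def fun_eq_iff)
  show "?u ` ?A \<subseteq> reps p k"
    using set_digit_in_reps assms by fastforce
  have "set_digit j i x 0 \<in> reps p k" "x j i < p" if "x \<in> reps p k" for x
    using set_digit_in_reps[OF that assms(1)] assms that unfolding reps_def qpv_def padic_def by auto
  thus "?v ` reps p k \<subseteq> ?A"
    by (auto simp: set_digit_def)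
qed

lemma sum_reps_set_digit:
  assumes "0 < p" "- int k \<le> i" "i < int k"
  shows "(\<Sum>x\<in>reps p k. g x) = (\<Sum>x\<in>{x \<in> reps p k. x j i = 0}. \<Sum>d<p. g (set_digit j i x d))"
proof -
  have "(\<Sum>x\<in>reps p k. g x) = (\<Sum>a\<in>{x \<in> reps p k. x j i = 0} \<times> {..<p}. g (case a of (x, d) \<Rightarrow> set_digit j i x d))"
    by (rule sum.reindex_bij_betw[OF bij_betw_set_digit[OF assms], symmetric])
  thus ?thesis by (simp add: sum.cartesian_product case_prod_unfold)
qed

lemma cylinder_set_digit:
  assumes "cylinder p K \<phi>" "x \<in> qpv p" "set_digit j i x d \<in> qpv p" "int K \<le> i"
  shows "\<phi> (set_digit j i x d) = \<phi> x"
proof -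
  have "set_digit j i x d \<in> pball K \<longleftrightarrow> x \<in> pball K"
    using assms(4) unfolding pball_def set_digit_def by auto
  moreover have "ptrunc K (set_digit j i x d) = ptrunc K x"
    using assms(4) unfolding ptrunc_def set_digit_def by (auto simp: fun_eq_iff)
  ultimately show ?thesis using assms(1-3) unfolding cylinder_def by metis
qed

lemma chi_set_digit:
  assumes p0: "0 < p" and \<xi>: "\<xi> \<in> pball k" and x: "x \<in> pball k" "x j0 i = 0"
    and i: "- int k \<le> i" "i < int k" and m: "\<forall>i'<m. \<xi> j0 i' = 0" "m < int k" "i = - m - 1"
  shows "chi p \<xi> (set_digit j0 i x d) = chi p \<xi> x * cis (2 * pi * real (\<xi> j0 m) / real p) ^ d"
proof -
  let ?T = "tval p (int k) (\<xi> j0)" and ?c = "real (\<xi> j0 m)" and ?t = "real d * real p powr real_of_int i"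
  have xd: "set_digit j0 i x d \<in> pball k" using x(1) i(1) unfolding pball_def set_digit_def by auto
  have tdot: "tdot p k \<xi> (set_digit j0 i x d) = tdot p k \<xi> x + ?T * ?t"
    by (rule tdot_set_digit[of x j0 i "- int k"]) (use x i pball_digits[OF x(1)] in auto)
  have "in_pZ p i ?t" by (rule in_pZ_digit[OF p0]) simp
  hence E: "in_pZ p 0 ((?T - ?c * real p powr real_of_int m) * ?t)"
    using in_pZ_mult[OF p0 tval_lowest_digit[OF p0 m(1,2)]] m(3) by fastforce
  have split: "?T * ?t = real d * ?c / real p + (?T - ?c * real p powr real_of_int m) * ?t"
  proof -
    have "real p powr real_of_int m * real p powr real_of_int i = 1 / real p"
      using p0 m(3) by (simp add: powr_add[symmetric] powr_neg_one)
    thus ?thesis by (simp add: algebra_simps)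
  qed
  have "chi p \<xi> (set_digit j0 i x d) = cis (2 * pi * (tdot p k \<xi> x + ?T * ?t))"
    using chi_eq_tdot[OF p0 \<xi> xd order_refl] tdot by simp
  also have "\<dots> = cis (2 * pi * ((tdot p k \<xi> x + real d * ?c / real p) +
      (?T - ?c * real p powr real_of_int m) * ?t))"
    unfolding split by (simp add: add.assoc)
  also have "\<dots> = cis (2 * pi * (tdot p k \<xi> x + real d * ?c / real p))"
    by (rule cis_add_in_pZ_0[OF p0 E])
  also have "\<dots> = cis (2 * pi * tdot p k \<xi> x + real d * (2 * pi * ?c / real p))"
    by (simp add: algebra_simps)
  also have "\<dots> = chi p \<xi> x * cis (2 * pi * ?c / real p) ^ d"
    unfolding chi_eq_tdot[OF p0 \<xi> x(1) order_refl] Complex.DeMoivre cis_mult by simp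
  finally show ?thesis .
qed

text \<open>If \<xi> j0 has a nonzero digit of index m < -K, changing digit -m-1 of x leaves \<phi> unchanged
  but turns \<chi>(\<xi> \<cdot> x) through all p-th roots of unity, so the Fourier sum cancels.\<close>
lemma hat_outside_pball:
  fixes \<phi> :: "('n::finite \<Rightarrow> padic) \<Rightarrow> complex"
  assumes p1: "1 < p" and \<phi>: "cylinder p K \<phi>" and \<xi>: "\<xi> \<in> qpv p" "\<xi> \<notin> pball K"
  shows "hat p \<phi> \<xi> = 0"
proof -
  have p0: "0 < p" using p1 by auto
  obtain j0 i0 where i0: "i0 < - int K" "\<xi> j0 i0 \<noteq> 0" using \<xi>(2) unfolding pball_def by auto
  obtain N0 where "\<forall>i<N0. \<xi> j0 i = 0" using \<xi>(1) unfolding qpv_def padic_def by blast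
  then obtain m where m: "\<xi> j0 m \<noteq> 0" "\<forall>i<m. \<xi> j0 i = 0" "m \<le> i0"
    using lowest_nonzero_digit i0(2) by blast
  define i where "i = - m - 1"
  have iK: "int K \<le> i" using m(3) i0 unfolding i_def by linarith
  obtain M where M: "\<xi> \<in> pball M" using qpv_in_pball[OF \<xi>(1)] .
  define k where "k = max (max K M) (nat i + 1)"
  have ik: "- int k \<le> i" "i < int k" and mk: "m < int k" and Kk: "max K M \<le> k"
    using iK i0 m(3) unfolding k_def i_def by auto
  have \<xi>k: "\<xi> \<in> pball k" using pball_mono[OF M] unfolding k_def by auto
  let ?g = "\<lambda>x. chi p \<xi> x * \<phi> x" and ?w = "cis (2 * pi * real (\<xi> j0 m) / real p)"
  have fibre: "?g (set_digit j0 i x d) = ?g x * ?w ^ d" if "x \<in> reps p k" "x j0 i = 0" "d < p" for x d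
  proof -
    have xk: "x \<in> pball k" using that(1) unfolding reps_def pball_def by auto
    have "\<phi> (set_digit j0 i x d) = \<phi> x"
      using cylinder_set_digit[OF \<phi> _ _ iK] set_digit_in_reps[OF that(1,3) ik] that(1) reps_qpv
      by blast
    thus ?thesis using chi_set_digit[OF p0 \<xi>k xk that(2) ik m(2) mk i_def] by simp
  qed
  have "(\<Sum>d<p. ?w ^ d) = 0"
    using m(1) \<xi>(1) unfolding qpv_def padic_def by (intro sum_root_of_unity_powers) auto
  have "(\<Sum>x\<in>reps p k. ?g x) = (\<Sum>x\<in>{x \<in> reps p k. x j0 i = 0}. \<Sum>d<p. ?g (set_digit j0 i x d))"
    by (rule sum_reps_set_digit[OF p0 ik])
  also have "\<dots> = (\<Sum>x\<in>{x \<in> reps p k. x j0 i = 0}. ?g x * (\<Sum>d<p. ?w ^ d))"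
    by (auto simp: sum_distrib_left fibre intro!: sum.cong)
  finally have "(\<Sum>x\<in>reps p k. ?g x) = 0" using \<open>(\<Sum>d<p. ?w ^ d) = 0\<close> by simp
  thus ?thesis unfolding hat_eq_riemann_sum[OF p0 \<phi> \<xi>(1) M Kk] riemann_sum_def by simp
qed

lemma cylinder_hat:
  fixes \<phi> :: "('n::finite \<Rightarrow> padic) \<Rightarrow> complex"
  assumes "1 < p" "cylinder p K \<phi>"
  shows "cylinder p K (hat p \<phi>)"
  unfolding cylinder_def
proof
  fix \<xi> :: "'n \<Rightarrow> padic" assume \<xi>: "\<xi> \<in> qpv p"
  show "hat p \<phi> \<xi> = (if \<xi> \<in> pball K then hat p \<phi> (ptrunc K \<xi>) else 0)"
  proof (cases "\<xi> \<in> pball K")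
    case True thus ?thesis using hat_ptrunc[of p K \<phi> \<xi>] assms \<xi> by simp
  next
    case False thus ?thesis using hat_outside_pball[OF assms \<xi> False] by simp
  qed
qed

lemma riemann_sum_diff: "riemann_sum p K (\<lambda>x. f x - g x) = riemann_sum p K f - riemann_sum p K g"
  unfolding riemann_sum_def by (simp add: sum_subtractf scaleR_diff_right)

lemma hat_diff:
  fixes \<phi> \<psi> :: "('n::finite \<Rightarrow> padic) \<Rightarrow> complex"
  assumes "0 < p" "cylinder p K1 \<phi>" "cylinder p K2 \<psi>"
  shows "hat p (\<phi> - \<psi>) \<xi> = hat p \<phi> \<xi> - hat p \<psi> \<xi>"
proof (cases "\<xi> \<in> qpv p")
  case False thus ?thesis unfolding hat_def by simp
next
  case True
  obtain M where M: "\<xi> \<in> pball M" using qpv_in_pball[OF True] .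
  define K' where "K' = max (max K1 K2) M"
  have c1: "cylinder p K' \<phi>" by (rule cylinder_mono[OF assms(2)]) (auto simp: K'_def)
  have c2: "cylinder p K' \<psi>" by (rule cylinder_mono[OF assms(3)]) (auto simp: K'_def)
  have c3: "cylinder p K' (\<phi> - \<psi>)" by (rule cylinder_diff[OF c1 c2])
  have le: "max K' M \<le> K'" by (simp add: K'_def)
  have "hat p (\<phi> - \<psi>) \<xi> = riemann_sum p K' (\<lambda>x. chi p \<xi> x * (\<phi> - \<psi>) x)"
    by (rule hat_eq_riemann_sum[OF assms(1) c3 True M le])
  also have "\<dots> = riemann_sum p K' (\<lambda>x. chi p \<xi> x * \<phi> x - chi p \<xi> x * \<psi> x)"
    by (simp add: algebra_simps)
  also have "\<dots> = hat p \<phi> \<xi> - hat p \<psi> \<xi>"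
    unfolding riemann_sum_diff hat_eq_riemann_sum[OF assms(1) c1 True M le] hat_eq_riemann_sum[OF assms(1) c2 True M le] ..
  finally show ?thesis .
qed

section \<open>Test functions are cylinder functions\<close>

definition agree_below :: "int \<Rightarrow> ('n \<Rightarrow> padic) \<Rightarrow> ('n \<Rightarrow> padic) \<Rightarrow> bool" where
  "agree_below L x y \<longleftrightarrow> (\<forall>j i. i < L \<longrightarrow> x j i = y j i)"

lemma vnorm_vsub_le:
  fixes x y :: "'n::finite \<Rightarrow> padic"
  assumes "agree_below L y x" "1 \<le> p"
  shows "vnorm p (vsub p y x) \<le> real p powr (- real_of_int L)"
proof (rule vnorm_le)
  fix j
  have "\<forall>i<L. vsub p y x j i = 0"
  proof (intro allI impI)
    fix i assume "i < L"
    have "tval p (i + 1) (y j) = tval p (i + 1) (x j)"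
      by (rule tval_cong) (use assms(1) \<open>i < L\<close> in \<open>auto simp: agree_below_def\<close>)
    thus "vsub p y x j i = 0" unfolding vsub_def psub_def by simp
  qed
  thus "pnorm p (vsub p y x j) \<le> real p powr (- real_of_int L)" by (rule pnorm_le_powr[OF _ assms(2)])
qed

text \<open>p^(-K) \<int>_p^n as a product of finite discrete digit spaces.\<close>
definition digit_topology :: "nat \<Rightarrow> nat \<Rightarrow> ('n \<Rightarrow> padic) topology" where
  "digit_topology p K = product_topology (\<lambda>j. product_topology
     (\<lambda>i. discrete_topology (if i < - int K then {0} else {..<p})) UNIV) UNIV"

lemma qpv_pball_iff_digits:
  fixes x :: "'n \<Rightarrow> padic"
  assumes "0 < p"
  shows "x \<in> qpv p \<inter> pball K \<longleftrightarrow> (\<forall>j i. x j i \<in> (if i < - int K then {0} else {..<p}))"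
proof
  assume "x \<in> qpv p \<inter> pball K"
  thus "\<forall>j i. x j i \<in> (if i < - int K then {0} else {..<p})" unfolding qpv_def padic_def pball_def by auto
next
  assume h: "\<forall>j i. x j i \<in> (if i < - int K then {0} else {..<p})"
  hence "\<forall>j i. i < - int K \<longrightarrow> x j i = 0" by (metis singletonD)
  moreover have "\<forall>j i. x j i < p" using h assms by (metis lessThan_iff singletonD)
  ultimately show "x \<in> qpv p \<inter> pball K" unfolding qpv_def padic_def pball_def by blast
qed

lemma topspace_digit_topology:
  assumes "0 < p"
  shows "topspace (digit_topology p K) = qpv p \<inter> pball K"
proof (rule set_eqI)
  fix x :: "'n \<Rightarrow> padic"
  have "x \<in> topspace (digit_topology p K) \<longleftrightarrow> (\<forall>j i. x j i \<in> (if i < - int K then {0} else {..<p}))"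
    unfolding digit_topology_def by (simp add: PiE_UNIV_domain Pi_iff)
  thus "x \<in> topspace (digit_topology p K) \<longleftrightarrow> x \<in> qpv p \<inter> pball K"
    unfolding qpv_pball_iff_digits[OF assms] .
qed

lemma compact_space_digit_topology: "compact_space (digit_topology p K)"
  unfolding digit_topology_def
  by (simp add: compact_space_product_topology compact_space_discrete_topology)

lemma openin_digit_topology_agree_below:
  fixes x :: "'n::finite \<Rightarrow> padic"
  assumes "0 < p" "x \<in> qpv p \<inter> pball K"
  shows "openin (digit_topology p K) {y \<in> qpv p \<inter> pball K. agree_below L y x}"
proof -
  let ?D = "\<lambda>i. if i < - int K then {0} else {..<p}"
  let ?E = "\<lambda>j i. if - int K \<le> i \<and> i < L then {x j i} else ?D i"
  have top: "y \<in> qpv p \<inter> pball K \<longleftrightarrow> (\<forall>j i. y j i \<in> ?D i)" for y :: "'n \<Rightarrow> padic"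
    by (rule qpv_pball_iff_digits[OF assms(1)])
  have xD: "x j i \<in> ?D i" for j i using assms(2) unfolding top by blast
  have open_row: "openin (product_topology (\<lambda>i. discrete_topology (?D i)) UNIV) (PiE UNIV (?E j))" for j
  proof (subst openin_PiE_gen, rule disjI2, intro conjI ballI)
    show "finite {i \<in> UNIV. ?E j i \<noteq> topspace (discrete_topology (?D i))}"
      by (rule finite_subset[of _ "{- int K..<L}"]) auto
  next
    fix i show "openin (discrete_topology (?D i)) (?E j i)"
      using xD[of j i] by (cases "- int K \<le> i \<and> i < L") auto
  qed
  have "y \<in> qpv p \<inter> pball K \<and> agree_below L y x \<longleftrightarrow> (\<forall>j i. y j i \<in> ?E j i)" for y
  proof
    assume h: "y \<in> qpv p \<inter> pball K \<and> agree_below L y x"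
    show "\<forall>j i. y j i \<in> ?E j i"
    proof (intro allI)
      fix j i
      have "y j i \<in> ?D i" using h unfolding top by blast
      moreover have "i < L \<Longrightarrow> y j i = x j i" using h unfolding agree_below_def by blast
      ultimately show "y j i \<in> ?E j i" by auto
    qed
  next
    assume h: "\<forall>j i. y j i \<in> ?E j i"
    have yD: "y j i \<in> ?D i" for j i
      using h[rule_format, of j i] xD[of j i] by (cases "- int K \<le> i \<and> i < L") auto
    have "y j i = x j i" if "i < L" for j i
    proof (cases "- int K \<le> i")
      case True thus ?thesis using h[rule_format, of j i] that by auto
    next
      case False thus ?thesis using yD[of j i] xD[of j i] by auto
    qed
    thus "y \<in> qpv p \<inter> pball K \<and> agree_below L y x" unfolding top agree_below_def using yD by blast
  qed
  hence "{y \<in> qpv p \<inter> pball K. agree_below L y x} = PiE UNIV (\<lambda>j. PiE UNIV (?E j))"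
    unfolding PiE_UNIV_domain Pi_iff ball_UNIV by blast
  thus ?thesis unfolding digit_topology_def
    by (simp only:) (subst openin_PiE_gen, rule disjI2, intro conjI ballI, auto intro: open_row)
qed
text \<open>Compactness of p^(-K) \<int>_p^n turns pointwise local constancy into a uniform level.\<close>
lemma uniformly_locally_constant:
  fixes \<phi> :: "('n::finite \<Rightarrow> padic) \<Rightarrow> 'a"
  assumes p0: "0 < p"
    and loc: "\<forall>x\<in>qpv p \<inter> pball K. \<exists>L. \<forall>y\<in>qpv p \<inter> pball K. agree_below L y x \<longrightarrow> \<phi> y = \<phi> x"
  shows "\<exists>L. \<forall>y\<in>qpv p \<inter> pball K. \<forall>z\<in>qpv p \<inter> pball K. agree_below L y z \<longrightarrow> \<phi> y = \<phi> z"
proof -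
  define B where "B = (qpv p \<inter> pball K :: ('n \<Rightarrow> padic) set)"
  obtain Lf where Lf: "\<forall>x\<in>B. \<forall>y\<in>B. agree_below (Lf x) y x \<longrightarrow> \<phi> y = \<phi> x"
    using bchoice[OF loc] unfolding B_def by blast
  define U where "U x = {y \<in> B. agree_below (Lf x) y x}" for x
  have "compact_space (digit_topology p K :: ('n \<Rightarrow> padic) topology)"
    by (rule compact_space_digit_topology)
  hence "compactin (digit_topology p K) B"
    unfolding compact_space_def B_def topspace_digit_topology[OF p0] .
  moreover have "\<forall>V\<in>U ` B. openin (digit_topology p K) V"
    using openin_digit_topology_agree_below[OF p0] unfolding U_def B_def by blast
  moreover have "B \<subseteq> \<Union> (U ` B)" unfolding U_def agree_below_def by blast
  ultimately obtain F where F: "finite F" "F \<subseteq> U ` B" "B \<subseteq> \<Union>F"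
    unfolding compactin_def by blast
  then obtain C where C: "C \<subseteq> B" "finite C" "F = U ` C"
    using finite_subset_image[OF F(1,2)] by blast
  define L where "L = Max (insert 0 (Lf ` C))"
  have LC: "Lf c \<le> L" if "c \<in> C" for c unfolding L_def using C that by (intro Max_ge) auto
  show ?thesis
  proof (intro exI[of _ L] ballI impI)
    fix y z :: "'n \<Rightarrow> padic"
    assume y: "y \<in> qpv p \<inter> pball K" and z: "z \<in> qpv p \<inter> pball K" and yz: "agree_below L y z"
    have "y \<in> \<Union> (U ` C)" using F(3) C(3) y unfolding B_def by auto
    then obtain c where c: "c \<in> C" "agree_below (Lf c) y c" unfolding U_def by blast
    have "z j i = c j i" if "i < Lf c" for j i
    proof -
      have "i < L" using LC[OF c(1)] that by linarith
      thus ?thesis using yz c(2) that unfolding agree_below_def by metis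
    qed
    hence "agree_below (Lf c) z c" unfolding agree_below_def by blast
    moreover have "c \<in> B" "y \<in> B" "z \<in> B" using c(1) C(1) y z unfolding B_def by auto
    ultimately show "\<phi> y = \<phi> z" using Lf c(2) by metis
  qed
qed

lemma dfun_vanishes_outside_pball:
  assumes "1 < p" "dfun p \<phi>"
  obtains K where "\<And>x. x \<in> qpv p \<Longrightarrow> x \<notin> pball K \<Longrightarrow> \<phi> x = 0"
proof -
  obtain R where R: "\<forall>x\<in>qpv p. R < vnorm p x \<longrightarrow> \<phi> x = 0"
    using assms(2) unfolding dfun_def by blast
  obtain K where K: "R < real p ^ K" using real_arch_pow assms(1) by fastforce
  have "\<phi> x = 0" if x: "x \<in> qpv p" "x \<notin> pball K" for x
  proof -
    obtain j i where ji: "i < - int K" "x j i \<noteq> 0" using x(2) unfolding pball_def by auto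
    have "real p ^ K = real p powr (real K)" using assms(1) by (simp add: powr_realpow)
    also have "\<dots> \<le> real p powr (- real_of_int i)"
      using ji assms(1) by (intro powr_mono) auto
    also have "\<dots> \<le> vnorm p x"
      using powr_le_pnorm[of p "x j" i] pnorm_le_vnorm[of p x j] x(1) ji assms(1)
      unfolding qpv_def by fastforce
    finally show ?thesis using R K x(1) by auto
  qed
  thus thesis by (rule that)
qed

lemma dfun_locally_constant:
  assumes "1 < p" "dfun p \<phi>" "x \<in> qpv p"
  shows "\<exists>L. \<forall>y\<in>qpv p. agree_below L y x \<longrightarrow> \<phi> y = \<phi> x"
proof -
  obtain e where e: "e > 0" "\<forall>y\<in>qpv p. vnorm p (vsub p y x) < e \<longrightarrow> \<phi> y = \<phi> x"
    using assms(2,3) unfolding dfun_def by blast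
  have "1 / real p < 1" using assms(1) by simp
  then obtain n where n: "(1 / real p) ^ n < e" using real_arch_pow_inv[OF e(1)] by blast
  have "real p powr (- real_of_int (int n)) = (1 / real p) ^ n"
    using assms(1) by (simp add: powr_minus powr_realpow power_one_over inverse_eq_divide)
  hence "vnorm p (vsub p y x) < e" if "agree_below (int n) y x" for y
    using vnorm_vsub_le[OF that, of p] n assms(1) by simp
  hence "\<phi> y = \<phi> x" if "y \<in> qpv p" "agree_below (int n) y x" for y
    using e(2) that by blast
  thus ?thesis by blast
qed

lemma dfun_cylinder:
  assumes p1: "1 < p" and \<phi>: "dfun p \<phi>"
  shows "\<exists>K. cylinder p K \<phi>"
proof -
  obtain K0 where outside: "\<And>x. x \<in> qpv p \<Longrightarrow> x \<notin> pball K0 \<Longrightarrow> \<phi> x = 0"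
    using dfun_vanishes_outside_pball[OF assms] by blast
  have loc: "\<forall>x\<in>qpv p \<inter> pball K0. \<exists>L. \<forall>y\<in>qpv p \<inter> pball K0. agree_below L y x \<longrightarrow> \<phi> y = \<phi> x"
    using dfun_locally_constant[OF assms] by blast
  obtain L where L: "\<forall>y\<in>qpv p \<inter> pball K0. \<forall>z\<in>qpv p \<inter> pball K0. agree_below L y z \<longrightarrow> \<phi> y = \<phi> z"
    using uniformly_locally_constant[OF _ loc] p1 by auto
  define K where "K = max K0 (nat L)"
  have "\<phi> x = (if x \<in> pball K then \<phi> (ptrunc K x) else 0)" if x: "x \<in> qpv p" for x
  proof (cases "x \<in> pball K0")
    case True
    have "x \<in> pball K" using pball_mono[OF True] unfolding K_def by auto
    moreover have "agree_below L (ptrunc K x) x" unfolding agree_below_def ptrunc_def K_def by auto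
    ultimately show ?thesis
      using L ptrunc_in_qpv[OF x] ptrunc_in_pball[OF True] x True by auto
  next
    case False
    thus ?thesis
      using outside[OF x] outside[OF ptrunc_in_qpv[OF x]] ptrunc_in_pball_iff by auto
  qed
  thus ?thesis unfolding cylinder_def by blast
qed

definition is_cylinder :: "nat \<Rightarrow> (('n::finite \<Rightarrow> padic) \<Rightarrow> complex) \<Rightarrow> bool" where
  "is_cylinder p f \<longleftrightarrow> (\<exists>K. cylinder p K f)"

lemma is_cylinder_common:
  assumes "is_cylinder p f" "is_cylinder p g"
  shows "\<exists>K. cylinder p K f \<and> cylinder p K g"
proof -
  obtain K1 K2 where "cylinder p K1 f" "cylinder p K2 g" using assms unfolding is_cylinder_def by blast
  thus ?thesis by (intro exI[of _ "max K1 K2"]) (auto intro: cylinder_mono)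
qed

lemma is_cylinder_common3:
  assumes "is_cylinder p f" "is_cylinder p g" "is_cylinder p h"
  shows "\<exists>K. cylinder p K f \<and> cylinder p K g \<and> cylinder p K h"
proof -
  obtain K1 K2 K3 where "cylinder p K1 f" "cylinder p K2 g" "cylinder p K3 h" using assms unfolding is_cylinder_def by blast
  thus ?thesis by (intro exI[of _ "max (max K1 K2) K3"]) (auto intro: cylinder_mono)
qed

lemma is_cylinder_diff: "is_cylinder p f \<Longrightarrow> is_cylinder p g \<Longrightarrow> is_cylinder p (f - g)"
  using is_cylinder_common cylinder_diff unfolding is_cylinder_def by metis

lemma is_cylinder_zero: "is_cylinder p ((\<lambda>_. 0) :: ('n::finite \<Rightarrow> padic) \<Rightarrow> complex)"
  unfolding is_cylinder_def cylinder_def by auto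

lemma dfun_is_cylinder: "1 < p \<Longrightarrow> dfun p f \<Longrightarrow> is_cylinder p f"
  unfolding is_cylinder_def by (rule dfun_cylinder)

section \<open>Weighted norms of cylinder functions\<close>

text \<open>Weights w for which max 1 (w \<xi>) does not change when \<xi> \<in> p^(-K) \<int>_p^n is truncated
  mod p^K; for them the weighted norm of a cylinder function is a finite sum.\<close>
definition trunc_invariant :: "nat \<Rightarrow> (('n::finite \<Rightarrow> padic) \<Rightarrow> real) \<Rightarrow> bool" where
  "trunc_invariant p w \<longleftrightarrow> (\<forall>K \<xi>. \<xi> \<in> qpv p \<longrightarrow> \<xi> \<in> pball K \<longrightarrow> max 1 (w \<xi>) = max 1 (w (ptrunc K \<xi>)))"

lemma cylinder_wnorm_integrand:
  fixes \<phi> :: "('n::finite \<Rightarrow> padic) \<Rightarrow> complex"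
  assumes "trunc_invariant p w" "cylinder p K (hat p \<phi>)"
  shows "cylinder p K (\<lambda>\<xi>. (max 1 (w \<xi>)) ^ l * (cmod (hat p \<phi> \<xi>))\<^sup>2)"
  unfolding cylinder_def
proof
  fix \<xi> :: "'n \<Rightarrow> padic" assume \<xi>: "\<xi> \<in> qpv p"
  show "(max 1 (w \<xi>)) ^ l * (cmod (hat p \<phi> \<xi>))\<^sup>2 = (if \<xi> \<in> pball K then
     (max 1 (w (ptrunc K \<xi>))) ^ l * (cmod (hat p \<phi> (ptrunc K \<xi>)))\<^sup>2 else 0)"
  proof (cases "\<xi> \<in> pball K")
    case True
    thus ?thesis using assms \<xi> unfolding trunc_invariant_def cylinder_def by auto
  next
    case False
    thus ?thesis using assms \<xi> unfolding cylinder_def by auto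
  qed
qed

lemma wnorm_eq_riemann_sum:
  fixes \<phi> :: "('n::finite \<Rightarrow> padic) \<Rightarrow> complex"
  assumes "1 < p" "trunc_invariant p w" "cylinder p K \<phi>"
  shows "wnorm p w l \<phi> = sqrt (riemann_sum p K (\<lambda>\<xi>. (max 1 (w \<xi>)) ^ l * (cmod (hat p \<phi> \<xi>))\<^sup>2))"
  unfolding wnorm_def
  by (subst haar_int_cylinder[OF _ cylinder_wnorm_integrand[OF assms(2) cylinder_hat[OF assms(1,3)]]]) (use assms in auto)

lemma trunc_invariant_zero: "trunc_invariant p (\<lambda>_. 0)"
  unfolding trunc_invariant_def by simp

lemma max1_vnorm: "max 1 (vnorm p (x::'n::finite \<Rightarrow> padic)) = Max (range (\<lambda>j. max 1 (pnorm p (x j))))"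
  unfolding vnorm_def by (subst hom_Max_commute[of "max 1"]) (auto simp: image_image max.left_commute max.assoc)

lemma max1_pnorm_truncated:
  assumes "padic p a" "1 \<le> p"
  shows "max 1 (pnorm p a) = max 1 (pnorm p (\<lambda>i. if i < int K then a i else 0))"
proof (cases "\<exists>i<int K. a i \<noteq> 0")
  case True
  then obtain i where i: "i < int K" "a i \<noteq> 0" by auto
  obtain N where N: "\<forall>i<N. a i = 0" using assms unfolding padic_def by blast
  obtain m where m: "a m \<noteq> 0" and low: "\<forall>j<m. a j = 0" and "m \<le> i"
    using lowest_nonzero_digit[OF N i(2)] by blast
  hence mK: "m < int K" using i by linarith
  have "pnorm p a = real p powr (- real_of_int m)" by (rule pnorm_eq_lowest_digit[OF m(1) low])
  moreover have "pnorm p (\<lambda>i. if i < int K then a i else 0) = real p powr (- real_of_int m)"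
    by (rule pnorm_eq_lowest_digit) (use m(1) low mK in auto)
  ultimately show ?thesis by simp
next
  case False
  hence "pnorm p a \<le> real p powr (- real_of_int (int K))"
    by (intro pnorm_le_powr assms(2)) auto
  also have "\<dots> \<le> real p powr 0" using assms by (intro powr_mono) auto
  also have "\<dots> = 1" using assms by simp
  finally have "pnorm p a \<le> 1" .
  moreover have "pnorm p (\<lambda>i. if i < int K then a i else 0) = 0"
    using False unfolding pnorm_def by auto
  ultimately show ?thesis by simp
qed

lemma max1_vnorm_ptrunc:
  assumes "\<xi> \<in> qpv p" "1 \<le> p"
  shows "max 1 (vnorm p (\<xi>::'n::finite \<Rightarrow> padic)) = max 1 (vnorm p (ptrunc K \<xi>))"
proof -
  have "\<And>j. max 1 (pnorm p (\<xi> j)) = max 1 (pnorm p (ptrunc K \<xi> j))"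
    unfolding ptrunc_def using assms by (intro max1_pnorm_truncated) (auto simp: qpv_def)
  thus ?thesis unfolding max1_vnorm by simp
qed

lemma trunc_invariant_vnorm: "1 \<le> p \<Longrightarrow> trunc_invariant p (vnorm p :: ('n::finite \<Rightarrow> padic) \<Rightarrow> real)"
  unfolding trunc_invariant_def using max1_vnorm_ptrunc by blast

definition weighted_hat :: "nat \<Rightarrow> (('n::finite \<Rightarrow> padic) \<Rightarrow> real) \<Rightarrow> nat \<Rightarrow> (('n \<Rightarrow> padic) \<Rightarrow> complex) \<Rightarrow> ('n \<Rightarrow> padic) \<Rightarrow> real" where
  "weighted_hat p w l f \<xi> = sqrt ((max 1 (w \<xi>)) ^ l) * cmod (hat p f \<xi>)"

definition cell_vol :: "nat \<Rightarrow> nat \<Rightarrow> 'n::finite itself \<Rightarrow> real" where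
  "cell_vol p K _ = real p powr (- (real K * real CARD('n)))"

lemma weighted_hat_nonneg: "0 \<le> weighted_hat p w l f \<xi>"
  unfolding weighted_hat_def by simp

lemma weighted_hat_sq: "(weighted_hat p w l f \<xi>)\<^sup>2 = (max 1 (w \<xi>)) ^ l * (cmod (hat p f \<xi>))\<^sup>2"
  unfolding weighted_hat_def by (simp add: power_mult_distrib)

lemma wnorm_eq_L2_set:
  fixes f :: "('n::finite \<Rightarrow> padic) \<Rightarrow> complex"
  assumes "1 < p" "trunc_invariant p w" "cylinder p K f"
  shows "wnorm p w l f = sqrt (cell_vol p K TYPE('n)) * L2_set (weighted_hat p w l f) (reps p K)"
proof -
  have "wnorm p w l f = sqrt (riemann_sum p K (\<lambda>\<xi>. (max 1 (w \<xi>)) ^ l * (cmod (hat p f \<xi>))\<^sup>2))"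
    by (rule wnorm_eq_riemann_sum[OF assms])
  also have "riemann_sum p K (\<lambda>\<xi>. (max 1 (w \<xi>)) ^ l * (cmod (hat p f \<xi>))\<^sup>2) =
      cell_vol p K TYPE('n) * (\<Sum>\<xi>\<in>reps p K. (weighted_hat p w l f \<xi>)\<^sup>2)"
    unfolding riemann_sum_def cell_vol_def weighted_hat_sq by simp
  finally show ?thesis unfolding L2_set_def by (simp add: real_sqrt_mult)
qed

lemma cell_vol_nonneg: "0 \<le> cell_vol p K TYPE('n::finite)"
  unfolding cell_vol_def by simp

lemma wnorm_nonneg:
  fixes f :: "('n::finite \<Rightarrow> padic) \<Rightarrow> complex"
  assumes "1 < p" "trunc_invariant p w" "is_cylinder p f"
  shows "0 \<le> wnorm p w l f"
proof -
  obtain K where K: "cylinder p K f" using assms unfolding is_cylinder_def by blast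
  have "0 \<le> cell_vol p K TYPE('n)" by (rule cell_vol_nonneg)
  thus ?thesis unfolding wnorm_eq_L2_set[OF assms(1,2) K] using L2_set_nonneg by simp
qed

lemma wnorm_triangle:
  fixes a b c :: "('n::finite \<Rightarrow> padic) \<Rightarrow> complex"
  assumes p1: "1 < p" and w: "trunc_invariant p w" and "is_cylinder p a" "is_cylinder p b" "is_cylinder p c"
  shows "wnorm p w l (a - c) \<le> wnorm p w l (a - b) + wnorm p w l (b - c)"
proof -
  have p0: "0 < p" using p1 by auto
  obtain K where K: "cylinder p K a" "cylinder p K b" "cylinder p K c" using is_cylinder_common3 assms by blast
  have pt: "weighted_hat p w l (a - c) \<xi> \<le> weighted_hat p w l (a - b) \<xi> + weighted_hat p w l (b - c) \<xi>" for \<xi>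
  proof -
    have "cmod (hat p (a - c) \<xi>) \<le> cmod (hat p (a - b) \<xi>) + cmod (hat p (b - c) \<xi>)"
      unfolding hat_diff[OF p0 K(1) K(3)] hat_diff[OF p0 K(1) K(2)] hat_diff[OF p0 K(2) K(3)]
      using norm_triangle_ineq[of "hat p a \<xi> - hat p b \<xi>" "hat p b \<xi> - hat p c \<xi>"] by simp
    thus ?thesis unfolding weighted_hat_def by (simp add: distrib_left[symmetric] mult_left_mono)
  qed
  have "L2_set (weighted_hat p w l (a - c)) (reps p K) \<le>
      L2_set (\<lambda>\<xi>. weighted_hat p w l (a - b) \<xi> + weighted_hat p w l (b - c) \<xi>) (reps p K)"
    by (rule L2_set_mono) (use pt weighted_hat_nonneg in auto)
  also have "\<dots> \<le> L2_set (weighted_hat p w l (a - b)) (reps p K) + L2_set (weighted_hat p w l (b - c)) (reps p K)"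
    by (rule L2_set_triangle_ineq)
  finally have "sqrt (cell_vol p K TYPE('n)) * L2_set (weighted_hat p w l (a - c)) (reps p K) \<le>
     sqrt (cell_vol p K TYPE('n)) * (L2_set (weighted_hat p w l (a - b)) (reps p K) + L2_set (weighted_hat p w l (b - c)) (reps p K))"
    by (rule mult_left_mono) (simp add: cell_vol_nonneg)
  thus ?thesis
    unfolding wnorm_eq_L2_set[OF p1 w cylinder_diff[OF K(1) K(3)]] wnorm_eq_L2_set[OF p1 w cylinder_diff[OF K(1) K(2)]]
      wnorm_eq_L2_set[OF p1 w cylinder_diff[OF K(2) K(3)]] by (simp add: distrib_left)
qed

lemma wnorm_commute:
  fixes a b :: "('n::finite \<Rightarrow> padic) \<Rightarrow> complex"
  assumes "1 < p" "is_cylinder p a" "is_cylinder p b"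
  shows "wnorm p w l (a - b) = wnorm p w l (b - a)"
proof -
  obtain K where K: "cylinder p K a" "cylinder p K b" using is_cylinder_common assms(2,3) by blast
  have "\<And>\<xi>. cmod (hat p (a - b) \<xi>) = cmod (hat p (b - a) \<xi>)"
    using hat_diff[of p K a K b] hat_diff[of p K b K a] K assms(1) by (simp add: norm_minus_commute)
  thus ?thesis unfolding wnorm_def by simp
qed

lemma wnorm_mono_weight:
  fixes f :: "('n::finite \<Rightarrow> padic) \<Rightarrow> complex"
  assumes p1: "1 < p" and w1: "trunc_invariant p w1" and w2: "trunc_invariant p w2" and f: "is_cylinder p f" and C: "0 \<le> C"
    and le: "\<And>\<xi>. \<xi> \<in> qpv p \<Longrightarrow> (max 1 (w1 \<xi>)) ^ l1 \<le> C * (max 1 (w2 \<xi>)) ^ l2"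
  shows "wnorm p w1 l1 f \<le> sqrt C * wnorm p w2 l2 f"
proof -
  obtain K where K: "cylinder p K f" using f unfolding is_cylinder_def by blast
  have "riemann_sum p K (\<lambda>\<xi>. (max 1 (w1 \<xi>)) ^ l1 * (cmod (hat p f \<xi>))\<^sup>2) \<le>
        C * riemann_sum p K (\<lambda>\<xi>. (max 1 (w2 \<xi>)) ^ l2 * (cmod (hat p f \<xi>))\<^sup>2)"
  proof -
    have "(\<Sum>\<xi>\<in>reps p K. (max 1 (w1 \<xi>)) ^ l1 * (cmod (hat p f \<xi>))\<^sup>2) \<le>
          (\<Sum>\<xi>\<in>reps p K. C * ((max 1 (w2 \<xi>)) ^ l2 * (cmod (hat p f \<xi>))\<^sup>2))"
    proof (rule sum_mono)
      fix \<xi> :: "'n \<Rightarrow> padic" assume "\<xi> \<in> reps p K"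
      hence "\<xi> \<in> qpv p" using reps_qpv by auto
      thus "(max 1 (w1 \<xi>)) ^ l1 * (cmod (hat p f \<xi>))\<^sup>2 \<le> C * ((max 1 (w2 \<xi>)) ^ l2 * (cmod (hat p f \<xi>))\<^sup>2)"
        using le mult_right_mono[OF le[of \<xi>], of "(cmod (hat p f \<xi>))\<^sup>2"] by (simp add: mult.assoc)
    qed
    hence S: "(\<Sum>\<xi>\<in>reps p K. (max 1 (w1 \<xi>)) ^ l1 * (cmod (hat p f \<xi>))\<^sup>2) \<le>
          C * (\<Sum>\<xi>\<in>reps p K. (max 1 (w2 \<xi>)) ^ l2 * (cmod (hat p f \<xi>))\<^sup>2)"
      by (simp add: sum_distrib_left)
    have "real p powr (- (real K * real CARD('n))) * (\<Sum>\<xi>\<in>reps p K. (max 1 (w1 \<xi>)) ^ l1 * (cmod (hat p f \<xi>))\<^sup>2) \<le>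
      real p powr (- (real K * real CARD('n))) * (C * (\<Sum>\<xi>\<in>reps p K. (max 1 (w2 \<xi>)) ^ l2 * (cmod (hat p f \<xi>))\<^sup>2))"
      by (rule mult_left_mono[OF S]) simp
    thus ?thesis unfolding riemann_sum_def by (simp add: mult.left_commute)
  qed
  hence "sqrt (riemann_sum p K (\<lambda>\<xi>. (max 1 (w1 \<xi>)) ^ l1 * (cmod (hat p f \<xi>))\<^sup>2)) \<le>
        sqrt C * sqrt (riemann_sum p K (\<lambda>\<xi>. (max 1 (w2 \<xi>)) ^ l2 * (cmod (hat p f \<xi>))\<^sup>2))"
    by (simp add: real_sqrt_mult[symmetric])
  thus ?thesis unfolding wnorm_eq_riemann_sum[OF p1 w1 K] wnorm_eq_riemann_sum[OF p1 w2 K] .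
qed

lemma L2_le_wnorm:
  fixes f :: "('n::finite \<Rightarrow> padic) \<Rightarrow> complex"
  assumes "1 < p" "trunc_invariant p w" "is_cylinder p f"
  shows "wnorm p (\<lambda>_. 0) 0 f \<le> wnorm p w l f"
  using wnorm_mono_weight[OF assms(1) trunc_invariant_zero assms(2,3), of 1 0 l] by simp

lemma weighted_hat_sq_le:
  fixes u v :: "('n::finite \<Rightarrow> padic) \<Rightarrow> complex"
  assumes "0 < p" "cylinder p K u" "cylinder p K v"
  shows "(weighted_hat p w l u \<xi>)\<^sup>2 \<le>
    weighted_hat p w l u \<xi> * weighted_hat p w l (u - v) \<xi> + weighted_hat p w (2 * l) u \<xi> * weighted_hat p (\<lambda>_. 0) 0 v \<xi>"
proof -
  define W where "W = (max 1 (w \<xi>)) ^ l"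
  have W0: "0 \<le> W" unfolding W_def by simp
  have sqrt2: "sqrt ((max 1 (w \<xi>)) ^ (2 * l)) = W"
    using W0 unfolding W_def by (simp add: power_mult mult.commute)
  have tri: "cmod (hat p u \<xi>) \<le> cmod (hat p (u - v) \<xi>) + cmod (hat p v \<xi>)"
    unfolding hat_diff[OF assms] using norm_triangle_ineq[of "hat p u \<xi> - hat p v \<xi>" "hat p v \<xi>"] by simp
  have "(weighted_hat p w l u \<xi>)\<^sup>2 = W * cmod (hat p u \<xi>) * cmod (hat p u \<xi>)"
    using W0 unfolding weighted_hat_def W_def by (simp add: power2_eq_square algebra_simps)
  also have "\<dots> \<le> W * cmod (hat p u \<xi>) * (cmod (hat p (u - v) \<xi>) + cmod (hat p v \<xi>))"
    by (rule mult_left_mono[OF tri]) (simp add: W0)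
  also have "\<dots> = weighted_hat p w l u \<xi> * weighted_hat p w l (u - v) \<xi> +
      weighted_hat p w (2 * l) u \<xi> * weighted_hat p (\<lambda>_. 0) 0 v \<xi>"
  proof -
    have "sqrt W * sqrt W = W" using W0 by simp
    thus ?thesis unfolding weighted_hat_def sqrt2 W_def[symmetric] by (simp add: algebra_simps)
  qed
  finally show ?thesis .
qed

text \<open>Interpolation between L^2 and the weighted norms; applied with v a late term of an
  L^2-null Cauchy sequence it forces the weighted norms of the sequence to 0.\<close>
lemma wnorm_sq_le:
  fixes u v :: "('n::finite \<Rightarrow> padic) \<Rightarrow> complex"
  assumes p1: "1 < p" and w: "trunc_invariant p w" and "is_cylinder p u" "is_cylinder p v"
  shows "(wnorm p w l u)\<^sup>2 \<le> wnorm p w l u * wnorm p w l (u - v) + wnorm p w (2 * l) u * wnorm p (\<lambda>_. 0) 0 v"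
proof -
  obtain K where K: "cylinder p K u" "cylinder p K v" using is_cylinder_common assms(3,4) by blast
  let ?A = "reps p K :: ('n \<Rightarrow> padic) set" and ?c = "cell_vol p K TYPE('n)"
  let ?L2 = "\<lambda>w' l' f. L2_set (weighted_hat p w' l' f) ?A"
  have "(\<Sum>\<xi>\<in>?A. (weighted_hat p w l u \<xi>)\<^sup>2) \<le>
      (\<Sum>\<xi>\<in>?A. weighted_hat p w l u \<xi> * weighted_hat p w l (u - v) \<xi>) +
      (\<Sum>\<xi>\<in>?A. weighted_hat p w (2 * l) u \<xi> * weighted_hat p (\<lambda>_. 0) 0 v \<xi>)"
    unfolding sum.distrib[symmetric] using p1 by (intro sum_mono weighted_hat_sq_le[OF _ K]) auto
  also have "\<dots> \<le> ?L2 w l u * ?L2 w l (u - v) + ?L2 w (2 * l) u * ?L2 (\<lambda>_. 0) 0 v"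
    using L2_set_mult_ineq[of "weighted_hat p w l u" "weighted_hat p w l (u - v)" ?A]
      L2_set_mult_ineq[of "weighted_hat p w (2 * l) u" "weighted_hat p (\<lambda>_. 0) 0 v" ?A]
    by (simp add: weighted_hat_nonneg)
  finally have "?c * (\<Sum>\<xi>\<in>?A. (weighted_hat p w l u \<xi>)\<^sup>2) \<le>
      ?c * (?L2 w l u * ?L2 w l (u - v) + ?L2 w (2 * l) u * ?L2 (\<lambda>_. 0) 0 v)"
    by (rule mult_left_mono) (simp add: cell_vol_nonneg)
  moreover have sqrt_c: "sqrt ?c * (sqrt ?c * x) = ?c * x" for x
    by (simp add: cell_vol_nonneg mult.assoc[symmetric])
  ultimately show ?thesis
    unfolding wnorm_eq_L2_set[OF p1 w K(1)] wnorm_eq_L2_set[OF p1 w cylinder_diff[OF K]]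
      wnorm_eq_L2_set[OF p1 trunc_invariant_zero K(2)]
    by (simp add: power_mult_distrib L2_set_def sum_nonneg cell_vol_nonneg algebra_simps sqrt_c)
qed

lemma fun_diff_zero: "f - (\<lambda>_. 0) = (f :: 'a \<Rightarrow> complex)"
  by (simp add: fun_diff_def)

lemma wnorm_diff_le:
  fixes a c :: "('n::finite \<Rightarrow> padic) \<Rightarrow> complex"
  assumes p1: "1 < p" and w: "trunc_invariant p w" and a: "is_cylinder p a" and c: "is_cylinder p c"
  shows "wnorm p w l (a - c) \<le> wnorm p w l a + wnorm p w l c"
proof -
  have "wnorm p w l (a - c) \<le> wnorm p w l (a - (\<lambda>_. 0)) + wnorm p w l ((\<lambda>_. 0) - c)"
    by (rule wnorm_triangle[OF p1 w a is_cylinder_zero c])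
  also have "wnorm p w l ((\<lambda>_. 0) - c) = wnorm p w l (c - (\<lambda>_. 0))"
    by (rule wnorm_commute[OF p1 is_cylinder_zero c])
  finally show ?thesis unfolding fun_diff_zero .
qed

lemma wnorm_diff_diff_le:
  fixes a b c d :: "('n::finite \<Rightarrow> padic) \<Rightarrow> complex"
  assumes p1: "1 < p" and w: "trunc_invariant p w" and "is_cylinder p a" "is_cylinder p b" "is_cylinder p c" "is_cylinder p d"
  shows "wnorm p w l ((a - b) - (c - d)) \<le> wnorm p w l (a - c) + wnorm p w l (b - d)"
proof -
  have "(a - b) - (c - d) = (a - c) - (b - d)" by (simp add: fun_diff_def algebra_simps)
  thus ?thesis using wnorm_diff_le[OF p1 w is_cylinder_diff[OF assms(3,5)] is_cylinder_diff[OF assms(4,6)]] by simp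
qed

lemma wnorm_reverse_triangle:
  fixes a c :: "('n::finite \<Rightarrow> padic) \<Rightarrow> complex"
  assumes p1: "1 < p" and w: "trunc_invariant p w" and a: "is_cylinder p a" and c: "is_cylinder p c"
  shows "\<bar>wnorm p w l a - wnorm p w l c\<bar> \<le> wnorm p w l (a - c)"
proof -
  have le_a: "wnorm p w l a \<le> wnorm p w l (a - c) + wnorm p w l c"
    using wnorm_triangle[OF p1 w a c is_cylinder_zero] unfolding fun_diff_zero .
  have "wnorm p w l c \<le> wnorm p w l (c - a) + wnorm p w l a"
    using wnorm_triangle[OF p1 w c a is_cylinder_zero] unfolding fun_diff_zero .
  hence le_c: "wnorm p w l c \<le> wnorm p w l (a - c) + wnorm p w l a"
    using wnorm_commute[OF p1 a c] by simp
  show ?thesis using le_a le_c by linarith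
qed

definition wnorm_cauchy :: "nat \<Rightarrow> (('n::finite \<Rightarrow> padic) \<Rightarrow> real) \<Rightarrow> nat \<Rightarrow> (nat \<Rightarrow> ('n \<Rightarrow> padic) \<Rightarrow> complex) \<Rightarrow> bool" where
  "wnorm_cauchy p w l u \<longleftrightarrow> (\<forall>e>0. \<exists>N. \<forall>m\<ge>N. \<forall>k\<ge>N. wnorm p w l (u m - u k) < e)"

lemma wnorm_sq_le_if_L2_null:
  fixes u :: "nat \<Rightarrow> ('n::finite \<Rightarrow> padic) \<Rightarrow> complex"
  assumes p1: "1 < p" and w: "trunc_invariant p w" and cu: "\<And>k. is_cylinder p (u k)"
    and null: "(\<lambda>k. wnorm p (\<lambda>_. 0) 0 (u k)) \<longlonglongrightarrow> 0" and \<delta>: "0 < \<delta>"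
    and N: "\<forall>m\<ge>N. \<forall>k\<ge>N. wnorm p w l (u m - u k) < \<delta>" and k: "N \<le> k"
  shows "(wnorm p w l (u k))\<^sup>2 \<le> wnorm p w l (u k) * \<delta> + \<delta>"
proof -
  let ?A = "wnorm p w (2 * l) (u k)"
  have A0: "0 \<le> ?A" by (rule wnorm_nonneg[OF p1 w cu])
  have "eventually (\<lambda>j. wnorm p (\<lambda>_. 0) 0 (u j) < \<delta> / (?A + 1)) sequentially"
    using order_tendstoD(2)[OF null] \<delta> A0 by simp
  then obtain J where J: "\<And>j. J \<le> j \<Longrightarrow> wnorm p (\<lambda>_. 0) 0 (u j) < \<delta> / (?A + 1)"
    unfolding eventually_sequentially by blast
  define j where "j = max J N"
  have "?A * wnorm p (\<lambda>_. 0) 0 (u j) \<le> ?A * (\<delta> / (?A + 1))"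
    using J[of j] A0 unfolding j_def by (intro mult_left_mono) auto
  also have "\<dots> \<le> \<delta>" using A0 \<delta> by (simp add: divide_simps)
  finally have "?A * wnorm p (\<lambda>_. 0) 0 (u j) \<le> \<delta>" .
  moreover have "wnorm p w l (u k) * wnorm p w l (u k - u j) \<le> wnorm p w l (u k) * \<delta>"
    using N k wnorm_nonneg[OF p1 w cu] unfolding j_def by (intro mult_left_mono) (auto intro: less_imp_le)
  ultimately show ?thesis using wnorm_sq_le[OF p1 w cu cu, of l k j] by linarith
qed

lemma wnorm_tendsto_0:
  fixes u :: "nat \<Rightarrow> ('n::finite \<Rightarrow> padic) \<Rightarrow> complex"
  assumes p1: "1 < p" and w: "trunc_invariant p w" and cu: "\<And>k. is_cylinder p (u k)"
    and null: "(\<lambda>k. wnorm p (\<lambda>_. 0) 0 (u k)) \<longlonglongrightarrow> 0" and cau: "wnorm_cauchy p w l u"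
  shows "(\<lambda>k. wnorm p w l (u k)) \<longlonglongrightarrow> 0"
proof (rule LIMSEQ_I)
  fix \<epsilon> :: real assume \<epsilon>: "0 < \<epsilon>"
  obtain N1 where N1: "\<forall>m\<ge>N1. \<forall>k\<ge>N1. wnorm p w l (u m - u k) < 1" using cau unfolding wnorm_cauchy_def by fastforce
  define B where "B = wnorm p w l (u N1) + 1"
  have bound: "wnorm p w l (u k) \<le> B" if "k \<ge> N1" for k
    using wnorm_triangle[OF p1 w cu[of k] cu[of N1] is_cylinder_zero, of l] N1 that
    unfolding B_def fun_diff_zero by force
  have B0: "0 \<le> B" unfolding B_def using wnorm_nonneg[OF p1 w cu] by (simp add: add_nonneg_nonneg)
  define \<delta> where "\<delta> = \<epsilon>\<^sup>2 / (2 * (B + 1))"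
  have \<delta>0: "0 < \<delta>" unfolding \<delta>_def using \<epsilon> B0 by simp
  obtain N2 where N2: "\<forall>m\<ge>N2. \<forall>k\<ge>N2. wnorm p w l (u m - u k) < \<delta>"
    using cau \<delta>0 unfolding wnorm_cauchy_def by blast
  have "wnorm p w l (u k) < \<epsilon>" if k: "max N1 N2 \<le> k" for k
  proof -
    have "(wnorm p w l (u k))\<^sup>2 \<le> wnorm p w l (u k) * \<delta> + \<delta>"
      using wnorm_sq_le_if_L2_null[OF p1 w cu null \<delta>0 N2] k by simp
    also have "\<dots> \<le> (B + 1) * \<delta>"
      using mult_right_mono[OF bound[of k] less_imp_le[OF \<delta>0]] k by (simp add: algebra_simps)
    also have "\<dots> = \<epsilon>\<^sup>2 / 2" unfolding \<delta>_def using B0 by (simp add: field_simps)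
    also have "\<dots> < \<epsilon>\<^sup>2" using \<epsilon> by simp
    finally have "(wnorm p w l (u k))\<^sup>2 < \<epsilon>\<^sup>2" .
    thus ?thesis using power_less_imp_less_base \<epsilon> by fastforce
  qed
  thus "\<exists>N. \<forall>k\<ge>N. norm (wnorm p w l (u k) - 0) < \<epsilon>"
    using wnorm_nonneg[OF p1 w cu] by (intro exI[of _ "max N1 N2"]) auto
qed

lemma haar_int_zero: "haar_int p (\<lambda>_. 0 :: 'a::real_normed_vector) = 0"
  unfolding haar_int_def by (simp add: limI)

lemma hat_zero: "hat p (\<lambda>_. 0) \<xi> = 0"
  unfolding hat_def by (simp add: haar_int_zero)

lemma wnorm_zero: "wnorm p w l (\<lambda>_. 0) = 0"
  unfolding wnorm_def hat_zero by (simp add: haar_int_zero)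

lemma wnorm_self: "wnorm p w l (f - f) = 0"
proof -
  have "f - f = (\<lambda>_. 0)" by (simp add: fun_diff_def)
  thus ?thesis by (simp add: wnorm_zero)
qed

section \<open>The completions B(w, l) and their distances\<close>

lemma wcauchy_is_cylinder: "1 < p \<Longrightarrow> wcauchy p w l s \<Longrightarrow> is_cylinder p (s k)"
  unfolding wcauchy_def using dfun_is_cylinder by blast

lemma wcauchy_wnorm_cauchy: "wcauchy p w l s \<Longrightarrow> wnorm_cauchy p w l s"
  unfolding wcauchy_def wnorm_cauchy_def by blast

lemma wnorm_cauchy_diff:
  fixes a b :: "nat \<Rightarrow> ('n::finite \<Rightarrow> padic) \<Rightarrow> complex"
  assumes p1: "1 < p" and w: "trunc_invariant p w"
    and ca: "\<And>k. is_cylinder p (a k)" and cb: "\<And>k. is_cylinder p (b k)"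
    and a: "wnorm_cauchy p w l a" and b: "wnorm_cauchy p w l b"
  shows "wnorm_cauchy p w l (\<lambda>k. a k - b k)"
  unfolding wnorm_cauchy_def
proof (intro allI impI)
  fix e :: real assume "0 < e"
  then obtain N1 N2 where N1: "\<forall>m\<ge>N1. \<forall>k\<ge>N1. wnorm p w l (a m - a k) < e / 2"
    and N2: "\<forall>m\<ge>N2. \<forall>k\<ge>N2. wnorm p w l (b m - b k) < e / 2"
    using a b unfolding wnorm_cauchy_def by (meson half_gt_zero)
  have "wnorm p w l ((a m - b m) - (a k - b k)) < e" if "max N1 N2 \<le> m" "max N1 N2 \<le> k" for m k
    using wnorm_diff_diff_le[OF p1 w ca cb ca cb, of l m m k k] N1 N2 that by fastforce
  thus "\<exists>N. \<forall>m\<ge>N. \<forall>k\<ge>N. wnorm p w l ((a m - b m) - (a k - b k)) < e" by blast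
qed

lemma wcauchy_L2:
  assumes p1: "1 < p" and w: "trunc_invariant p w" and s: "wcauchy p w l s"
  shows "wcauchy p (\<lambda>_. 0) 0 s"
  unfolding wcauchy_def
proof (intro conjI allI impI)
  fix k show "dfun p (s k)" using s unfolding wcauchy_def by auto
next
  fix e :: real assume "0 < e"
  then obtain N where N: "\<forall>m\<ge>N. \<forall>k\<ge>N. wnorm p w l (s m - s k) < e" using s unfolding wcauchy_def by blast
  have "wnorm p (\<lambda>_. 0) 0 (s m - s k) \<le> wnorm p w l (s m - s k)" for m k
    by (rule L2_le_wnorm[OF p1 w is_cylinder_diff[OF wcauchy_is_cylinder[OF p1 s] wcauchy_is_cylinder[OF p1 s]]])
  thus "\<exists>N. \<forall>m\<ge>N. \<forall>k\<ge>N. wnorm p (\<lambda>_. 0) 0 (s m - s k) < e" using N by (meson le_less_trans)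
qed

lemma cls_refl:
  assumes "1 < p" "trunc_invariant p w" "wcauchy p w l s"
  shows "s \<in> cls p s"
  unfolding cls_def using wcauchy_L2[OF assms] by (simp add: wnorm_self)

lemma convergent_wnorm_diff:
  fixes s t :: "nat \<Rightarrow> ('n::finite \<Rightarrow> padic) \<Rightarrow> complex"
  assumes p1: "1 < p" and w: "trunc_invariant p w" and s: "wcauchy p w l s" and t: "wcauchy p w l t"
  shows "convergent (\<lambda>k. wnorm p w l (s k - t k))"
proof (rule Cauchy_convergent, rule metric_CauchyI)
  fix e :: real assume e: "0 < e"
  have cs: "\<And>k. is_cylinder p (s k)" and ct: "\<And>k. is_cylinder p (t k)"
    using wcauchy_is_cylinder[OF p1] s t by auto
  obtain N where N: "\<forall>m\<ge>N. \<forall>n\<ge>N. wnorm p w l ((s m - t m) - (s n - t n)) < e"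
    using wnorm_cauchy_diff[OF p1 w cs ct wcauchy_wnorm_cauchy[OF s] wcauchy_wnorm_cauchy[OF t]] e
    unfolding wnorm_cauchy_def by blast
  have "dist (wnorm p w l (s m - t m)) (wnorm p w l (s n - t n)) < e" if "N \<le> m" "N \<le> n" for m n
    using wnorm_reverse_triangle[OF p1 w is_cylinder_diff[OF cs[of m] ct[of m]] is_cylinder_diff[OF cs[of n] ct[of n]], of l]
      N that unfolding dist_real_def by fastforce
  thus "\<exists>M. \<forall>m\<ge>M. \<forall>n\<ge>M. dist (wnorm p w l (s m - t m)) (wnorm p w l (s n - t n)) < e" by blast
qed

text \<open>Well-definedness of cdist: representatives of the same classes give the same limit.\<close>
lemma wnorm_diff_cls_tendsto_0:
  fixes s t s' t' :: "nat \<Rightarrow> ('n::finite \<Rightarrow> padic) \<Rightarrow> complex"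
  assumes p1: "1 < p" and w: "trunc_invariant p w"
    and s: "wcauchy p w l s" and t: "wcauchy p w l t" and s': "wcauchy p w l s'" and t': "wcauchy p w l t'"
    and ss': "s' \<in> cls p s" and tt': "t' \<in> cls p t"
  shows "(\<lambda>k. wnorm p w l (s k - t k) - wnorm p w l (s' k - t' k)) \<longlonglongrightarrow> 0"
proof -
  have cs: "\<And>k. is_cylinder p (s k)" and ct: "\<And>k. is_cylinder p (t k)"
    and cs': "\<And>k. is_cylinder p (s' k)" and ct': "\<And>k. is_cylinder p (t' k)"
    using wcauchy_is_cylinder[OF p1] s t s' t' by auto
  define u where "u k = (s k - t k) - (s' k - t' k)" for k
  have cu: "\<And>k. is_cylinder p (u k)" unfolding u_def by (intro is_cylinder_diff cs ct cs' ct')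
  have null: "(\<lambda>k. wnorm p (\<lambda>_. 0) 0 (s k - s' k) + wnorm p (\<lambda>_. 0) 0 (t k - t' k)) \<longlonglongrightarrow> 0"
    using tendsto_add[of _ 0 _ _ 0] ss' tt' unfolding cls_def by fastforce
  have "\<forall>k. norm (wnorm p (\<lambda>_. 0) 0 (u k)) \<le> wnorm p (\<lambda>_. 0) 0 (s k - s' k) + wnorm p (\<lambda>_. 0) 0 (t k - t' k)"
    using wnorm_nonneg[OF p1 trunc_invariant_zero cu] wnorm_diff_diff_le[OF p1 trunc_invariant_zero cs ct cs' ct']
    unfolding u_def by (simp add: abs_of_nonneg)
  hence "(\<lambda>k. wnorm p (\<lambda>_. 0) 0 (u k)) \<longlonglongrightarrow> 0"
    by (rule Lim_null_comparison[OF always_eventually null])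
  moreover have "wnorm_cauchy p w l u"
    unfolding u_def using wcauchy_wnorm_cauchy s t s' t'
    by (intro wnorm_cauchy_diff[OF p1 w] is_cylinder_diff cs ct cs' ct') auto
  ultimately have u0: "(\<lambda>k. wnorm p w l (u k)) \<longlonglongrightarrow> 0" by (rule wnorm_tendsto_0[OF p1 w cu])
  have "\<forall>k. norm (wnorm p w l (s k - t k) - wnorm p w l (s' k - t' k)) \<le> wnorm p w l (u k)"
    unfolding u_def real_norm_def by (intro allI wnorm_reverse_triangle[OF p1 w] is_cylinder_diff cs ct cs' ct')
  thus ?thesis by (rule Lim_null_comparison[OF always_eventually u0])
qed

lemma tendsto_cdist:
  fixes s t :: "nat \<Rightarrow> ('n::finite \<Rightarrow> padic) \<Rightarrow> complex"
  assumes p1: "1 < p" and w: "trunc_invariant p w" and s: "wcauchy p w l s" and t: "wcauchy p w l t"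
  shows "(\<lambda>k. wnorm p w l (s k - t k)) \<longlonglongrightarrow> cdist p w l (cls p s) (cls p t)"
proof -
  obtain r0 where r0: "(\<lambda>k. wnorm p w l (s k - t k)) \<longlonglongrightarrow> r0"
    using convergent_wnorm_diff[OF assms] unfolding convergent_def by blast
  have "cdist p w l (cls p s) (cls p t) = r0"
    unfolding cdist_def
  proof (rule the_equality)
    show "\<exists>s'\<in>cls p s. \<exists>t'\<in>cls p t. wcauchy p w l s' \<and> wcauchy p w l t' \<and> (\<lambda>k. wnorm p w l (s' k - t' k)) \<longlonglongrightarrow> r0"
      using cls_refl[OF p1 w s] cls_refl[OF p1 w t] s t r0 by blast
  next
    fix r assume "\<exists>s'\<in>cls p s. \<exists>t'\<in>cls p t. wcauchy p w l s' \<and> wcauchy p w l t' \<and> (\<lambda>k. wnorm p w l (s' k - t' k)) \<longlonglongrightarrow> r"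
    then obtain s' t' where "s' \<in> cls p s" "t' \<in> cls p t" "wcauchy p w l s'" "wcauchy p w l t'"
      and r: "(\<lambda>k. wnorm p w l (s' k - t' k)) \<longlonglongrightarrow> r" by blast
    hence "(\<lambda>k. wnorm p w l (s k - t k) - wnorm p w l (s' k - t' k)) \<longlonglongrightarrow> 0"
      using wnorm_diff_cls_tendsto_0[OF p1 w s t] by blast
    moreover have "(\<lambda>k. wnorm p w l (s k - t k) - wnorm p w l (s' k - t' k)) \<longlonglongrightarrow> r0 - r"
      by (rule tendsto_diff[OF r0 r])
    ultimately show "r = r0" using LIMSEQ_unique by fastforce
  qed
  thus ?thesis using r0 by simp
qed

lemma wcauchy_mono_weight:
  fixes s :: "nat \<Rightarrow> ('n::finite \<Rightarrow> padic) \<Rightarrow> complex"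
  assumes p1: "1 < p" and w1: "trunc_invariant p w1" and w2: "trunc_invariant p w2" and C: "0 \<le> C"
    and le: "\<forall>\<xi>\<in>qpv p. (max 1 (w1 \<xi>)) ^ l1 \<le> C * (max 1 (w2 \<xi>)) ^ l2"
    and s: "wcauchy p w2 l2 s"
  shows "wcauchy p w1 l1 s"
  unfolding wcauchy_def
proof (intro conjI allI impI)
  fix k show "dfun p (s k)" using s unfolding wcauchy_def by auto
next
  fix e :: real assume e: "0 < e"
  have sc: "0 \<le> sqrt C" using C by simp
  have sc1: "0 < sqrt C + 1" using sc by linarith
  have e': "0 < e / (sqrt C + 1)" using e sc1 by (rule divide_pos_pos)
  then obtain N where N: "\<forall>m\<ge>N. \<forall>k\<ge>N. wnorm p w2 l2 (s m - s k) < e / (sqrt C + 1)"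
    using s unfolding wcauchy_def by blast
  show "\<exists>N. \<forall>m\<ge>N. \<forall>k\<ge>N. wnorm p w1 l1 (s m - s k) < e"
  proof (intro exI[of _ N] allI impI)
    fix m k assume m: "N \<le> m" and k: "N \<le> k"
    have c: "is_cylinder p (s m - s k)" by (intro is_cylinder_diff wcauchy_is_cylinder[OF p1 s])
    have "wnorm p w1 l1 (s m - s k) \<le> sqrt C * wnorm p w2 l2 (s m - s k)"
      by (rule wnorm_mono_weight[OF p1 w1 w2 c C]) (use le in auto)
    also have "\<dots> \<le> sqrt C * (e / (sqrt C + 1))"
      using N m k C by (intro mult_left_mono) (auto intro: less_imp_le)
    also have "\<dots> < e"
    proof -
      have "sqrt C * (e / (sqrt C + 1)) = e * (sqrt C / (sqrt C + 1))" by simp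
      also have "sqrt C / (sqrt C + 1) < 1" using sc1 by (simp add: divide_less_eq)
      hence "e * (sqrt C / (sqrt C + 1)) < e * 1" using e by (intro mult_strict_left_mono) auto
      finally show ?thesis by simp
    qed
    finally show "wnorm p w1 l1 (s m - s k) < e" .
  qed
qed

lemma Bsp_mono_weight:
  fixes F :: "(nat \<Rightarrow> ('n::finite \<Rightarrow> padic) \<Rightarrow> complex) set"
  assumes p1: "1 < p" and w1: "trunc_invariant p w1" and w2: "trunc_invariant p w2" and C: "0 \<le> C"
    and le: "\<forall>\<xi>\<in>qpv p. (max 1 (w1 \<xi>)) ^ l1 \<le> C * (max 1 (w2 \<xi>)) ^ l2"
    and F: "F \<in> Bsp p w2 l2"
  shows "F \<in> Bsp p w1 l1"
  using F wcauchy_mono_weight[OF p1 w1 w2 C le] unfolding Bsp_def by blast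

lemma cdist_nonneg:
  fixes F G :: "(nat \<Rightarrow> ('n::finite \<Rightarrow> padic) \<Rightarrow> complex) set"
  assumes p1: "1 < p" and w: "trunc_invariant p w" and F: "F \<in> Bsp p w l" and G: "G \<in> Bsp p w l"
  shows "0 \<le> cdist p w l F G"
proof -
  obtain s t where s: "wcauchy p w l s" "F = cls p s" and t: "wcauchy p w l t" "G = cls p t"
    using F G unfolding Bsp_def by blast
  have lim: "(\<lambda>k. wnorm p w l (s k - t k)) \<longlonglongrightarrow> cdist p w l F G"
    unfolding s(2) t(2) by (rule tendsto_cdist[OF p1 w s(1) t(1)])
  show ?thesis
    by (rule LIMSEQ_le_const[OF lim])
      (use wnorm_nonneg[OF p1 w is_cylinder_diff[OF wcauchy_is_cylinder[OF p1 s(1)] wcauchy_is_cylinder[OF p1 t(1)]]]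
        in auto)
qed

lemma cdist_mono_weight:
  fixes F G :: "(nat \<Rightarrow> ('n::finite \<Rightarrow> padic) \<Rightarrow> complex) set"
  assumes p1: "1 < p" and w1: "trunc_invariant p w1" and w2: "trunc_invariant p w2" and C: "0 \<le> C"
    and le: "\<forall>\<xi>\<in>qpv p. (max 1 (w1 \<xi>)) ^ l1 \<le> C * (max 1 (w2 \<xi>)) ^ l2"
    and F: "F \<in> Bsp p w2 l2" and G: "G \<in> Bsp p w2 l2"
  shows "cdist p w1 l1 F G \<le> sqrt C * cdist p w2 l2 F G"
proof -
  obtain s t where s: "wcauchy p w2 l2 s" "F = cls p s" and t: "wcauchy p w2 l2 t" "G = cls p t"
    using F G unfolding Bsp_def by blast
  have s1: "wcauchy p w1 l1 s" by (rule wcauchy_mono_weight[OF p1 w1 w2 C le s(1)])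
  have t1: "wcauchy p w1 l1 t" by (rule wcauchy_mono_weight[OF p1 w1 w2 C le t(1)])
  have lim1: "(\<lambda>k. wnorm p w1 l1 (s k - t k)) \<longlonglongrightarrow> cdist p w1 l1 F G"
    unfolding s(2) t(2) by (rule tendsto_cdist[OF p1 w1 s1 t1])
  have lim2: "(\<lambda>k. sqrt C * wnorm p w2 l2 (s k - t k)) \<longlonglongrightarrow> sqrt C * cdist p w2 l2 F G"
    unfolding s(2) t(2) by (rule tendsto_mult_left, rule tendsto_cdist[OF p1 w2 s(1) t(1)])
  show ?thesis
  proof (rule LIMSEQ_le[OF lim1 lim2], intro exI allI impI)
    fix k
    have c: "is_cylinder p (s k - t k)" by (intro is_cylinder_diff wcauchy_is_cylinder[OF p1 s(1)] wcauchy_is_cylinder[OF p1 t(1)])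
    show "wnorm p w1 l1 (s k - t k) \<le> sqrt C * wnorm p w2 l2 (s k - t k)"
      by (rule wnorm_mono_weight[OF p1 w1 w2 c C]) (use le in auto)
  qed
qed

section \<open>Domination of weights and the Fr\'echet metrics\<close>

definition weight_dominated :: "nat \<Rightarrow> (('n \<Rightarrow> padic) \<Rightarrow> real) \<Rightarrow> (('n \<Rightarrow> padic) \<Rightarrow> real) \<Rightarrow> bool" where
  "weight_dominated p w1 w2 \<longleftrightarrow>
     (\<forall>l. \<exists>m C. 0 \<le> C \<and> (\<forall>\<xi>\<in>qpv p. (max 1 (w1 \<xi>)) ^ l \<le> C * (max 1 (w2 \<xi>)) ^ m))"

lemma Binf_mono_weight:
  fixes w1 w2 :: "('n::finite \<Rightarrow> padic) \<Rightarrow> real"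
  assumes "1 < p" "trunc_invariant p w1" "trunc_invariant p w2" "weight_dominated p w1 w2"
  shows "Binf p w2 \<subseteq> Binf p w1"
proof
  fix F assume F: "F \<in> Binf p w2"
  show "F \<in> Binf p w1" unfolding Binf_def
  proof
    fix l
    obtain m C where "0 \<le> C" "\<forall>\<xi>\<in>qpv p. (max 1 (w1 \<xi>)) ^ l \<le> C * (max 1 (w2 \<xi>)) ^ m"
      using assms(4) unfolding weight_dominated_def by blast
    moreover have "F \<in> Bsp p w2 m" using F unfolding Binf_def by auto
    ultimately show "F \<in> Bsp p w1 l" by (rule Bsp_mono_weight[OF assms(1-3)])
  qed
qed

definition sup_metric :: "(nat \<Rightarrow> real) \<Rightarrow> real" where
  "sup_metric c = (SUP l. (1/2) ^ l * c l / (1 + c l))"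

lemma fdist_eq_sup_metric: "fdist p w F G = sup_metric (\<lambda>l. cdist p w l F G)"
  unfolding fdist_def sup_metric_def ..

lemma sup_metric_term_le:
  assumes "0 \<le> (c::real)"
  shows "(1/2) ^ l * c / (1 + c) \<le> (1/2) ^ l" and "(1/2) ^ l * c / (1 + c) \<le> c"
proof -
  have "c * 1 \<le> c * (1 + c)" using assms by (intro mult_left_mono) auto
  hence le_c: "c / (1 + c) \<le> c" using assms by (simp add: divide_simps)
  have le_1: "c / (1 + c) \<le> 1" using assms by (simp add: divide_simps)
  have h: "(1/2::real) ^ l \<le> 1" "0 \<le> (1/2::real) ^ l" by (simp_all add: power_le_one)
  show "(1/2) ^ l * c / (1 + c) \<le> (1/2) ^ l" using mult_left_mono[OF le_1 h(2)] by simp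
  show "(1/2) ^ l * c / (1 + c) \<le> c" using mult_mono[OF h(1) le_c] assms by simp
qed

lemma sup_metric_ge:
  assumes "\<forall>l. 0 \<le> c l"
  shows "(1/2) ^ l * c l / (1 + c l) \<le> sup_metric c"
proof -
  have "(1/2) ^ k * c k / (1 + c k) \<le> 1" for k
    using sup_metric_term_le(1)[of "c k" k] assms power_le_one[of "1/2::real" k] by simp
  hence "bdd_above (range (\<lambda>k. (1/2::real) ^ k * c k / (1 + c k)))" by (intro bdd_aboveI2)
  thus ?thesis unfolding sup_metric_def by (rule cSUP_upper[OF UNIV_I])
qed

lemma sup_metric_le: "(\<And>l. (1/2) ^ l * c l / (1 + c l) \<le> r) \<Longrightarrow> sup_metric c \<le> r"
  unfolding sup_metric_def by (rule cSUP_least) auto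

text \<open>The first L terms of the supremum are controlled one seminorm at a time; the others are
  below 2^(-L).\<close>
lemma sup_metric_uniformly_continuous:
  fixes C :: "nat \<Rightarrow> real" and m :: "nat \<Rightarrow> nat"
  assumes C: "\<And>l. 0 \<le> C l" and e: "0 < e"
  obtains d where "0 < d" "\<And>a b. (\<And>l. 0 \<le> a l) \<Longrightarrow> (\<And>l. 0 \<le> b l) \<Longrightarrow> (\<And>l. b l \<le> C l * a (m l))
      \<Longrightarrow> sup_metric a < d \<Longrightarrow> sup_metric b < e"
proof -
  obtain L where L: "(1/2::real) ^ L < e / 2" using real_arch_pow_inv[of "e / 2" "1/2"] e by auto
  define \<eta> where "\<eta> l = (e / 2) / (C l + 1)" for l
  have \<eta>: "0 < \<eta> l" "C l * \<eta> l \<le> e / 2" for l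
    using C[of l] e unfolding \<eta>_def by (auto simp: field_simps)
  define d where "d = Min (insert 1 ((\<lambda>l. (1/2::real) ^ m l * (\<eta> l / (1 + \<eta> l))) ` {..<L}))"
  have "0 < (1/2::real) ^ m l * (\<eta> l / (1 + \<eta> l))" for l
    using \<eta>(1)[of l] by (intro mult_pos_pos) auto
  hence d: "0 < d" unfolding d_def by (subst Min_gr_iff) auto
  have dl: "d \<le> (1/2) ^ m l * (\<eta> l / (1 + \<eta> l))" if "l < L" for l
    unfolding d_def using that by (intro Min_le) auto
  have "sup_metric b < e"
    if a: "\<And>l. 0 \<le> a l" and b: "\<And>l. 0 \<le> b l" and ba: "\<And>l. b l \<le> C l * a (m l)"
      and ad: "sup_metric a < d" for a b
  proof -
    have "(1/2) ^ l * b l / (1 + b l) \<le> e / 2" for l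
    proof (cases "L \<le> l")
      case True
      have "(1/2::real) ^ l \<le> (1/2) ^ L" using True by (intro power_decreasing) auto
      thus ?thesis using sup_metric_term_le(1)[OF b[of l], of l] L by linarith
    next
      case False
      have "(1/2) ^ m l * (a (m l) / (1 + a (m l))) < (1/2) ^ m l * (\<eta> l / (1 + \<eta> l))"
        using sup_metric_ge[of a "m l"] a ad dl[of l] False by simp
      hence "a (m l) / (1 + a (m l)) < \<eta> l / (1 + \<eta> l)" by (rule mult_left_less_imp_less) simp
      hence "a (m l) < \<eta> l" using a[of "m l"] \<eta>(1)[of l] by (simp add: divide_simps algebra_simps)
      hence "b l \<le> e / 2"
        using ba[of l] \<eta>(2)[of l] mult_left_mono[of "a (m l)" "\<eta> l" "C l"] C[of l] by linarith
      thus ?thesis using sup_metric_term_le(2)[OF b[of l], of l] by linarith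
    qed
    hence "sup_metric b \<le> e / 2" by (rule sup_metric_le)
    thus ?thesis using e by linarith
  qed
  with d show thesis by (intro that) auto
qed

lemma fdist_uniformly_continuous:
  fixes w1 w2 :: "('n::finite \<Rightarrow> padic) \<Rightarrow> real"
  assumes p1: "1 < p" and w: "trunc_invariant p w1" "trunc_invariant p w2"
    and dom: "weight_dominated p w1 w2" and e: "0 < e"
  obtains d where "0 < d" "\<And>F G. F \<in> Binf p w2 \<Longrightarrow> G \<in> Binf p w2 \<Longrightarrow> fdist p w2 F G < d \<Longrightarrow> fdist p w1 F G < e"
proof -
  obtain m C where mC: "\<And>l. 0 \<le> C l" "\<And>l. \<forall>\<xi>\<in>qpv p. (max 1 (w1 \<xi>)) ^ l \<le> C l * (max 1 (w2 \<xi>)) ^ m l"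
    using dom unfolding weight_dominated_def by metis
  obtain d where d: "0 < d" "\<And>a b. (\<And>l. 0 \<le> a l) \<Longrightarrow> (\<And>l. 0 \<le> b l) \<Longrightarrow>
      (\<And>l. b l \<le> sqrt (C l) * a (m l)) \<Longrightarrow> sup_metric a < d \<Longrightarrow> sup_metric b < e"
    using sup_metric_uniformly_continuous[where C="\<lambda>l. sqrt (C l)" and m=m, OF _ e] mC(1)
    by (metis real_sqrt_ge_zero)
  have "fdist p w1 F G < e" if F: "F \<in> Binf p w2" and G: "G \<in> Binf p w2" and FG: "fdist p w2 F G < d" for F G
  proof -
    have F1: "F \<in> Bsp p w1 l" and G1: "G \<in> Bsp p w1 l" and F2: "F \<in> Bsp p w2 l" and G2: "G \<in> Bsp p w2 l" for l
      using F G Binf_mono_weight[OF p1 w dom] unfolding Binf_def by auto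
    show ?thesis unfolding fdist_eq_sup_metric
    proof (rule d(2))
      show "0 \<le> cdist p w2 l F G" "0 \<le> cdist p w1 l F G" for l
        using cdist_nonneg[OF p1 w(2) F2 G2] cdist_nonneg[OF p1 w(1) F1 G1] by auto
      show "cdist p w1 l F G \<le> sqrt (C l) * cdist p w2 (m l) F G" for l
        by (rule cdist_mono_weight[OF p1 w mC(1) mC(2) F2 G2])
      show "sup_metric (\<lambda>l. cdist p w2 l F G) < d" using FG unfolding fdist_eq_sup_metric .
    qed
  qed
  with d(1) show thesis by (rule that)
qed

lemma trunc_invariant_admissible:
  fixes \<psi> :: "('n::finite \<Rightarrow> padic) \<Rightarrow> complex"
  assumes "1 \<le> p" "admissible p \<psi>"
  shows "trunc_invariant p (\<lambda>\<xi>. cmod (\<psi> \<xi>))"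
  unfolding trunc_invariant_def
proof (intro allI impI)
  fix K and \<xi> :: "'n \<Rightarrow> padic" assume \<xi>: "\<xi> \<in> qpv p" "\<xi> \<in> pball K"
  let ?S = "(\<lambda>\<xi>. cmod (\<psi> \<xi>)) ` {\<xi> \<in> qpv p. vnorm p \<xi> \<le> 1}"
  have bdd: "bdd_above ?S" and sup: "Sup ?S \<le> 1" and rad: "radial p \<psi>"
    using assms(2) unfolding admissible_def Let_def by auto
  have small: "cmod (\<psi> \<eta>) \<le> 1" if "\<eta> \<in> qpv p" "vnorm p \<eta> \<le> 1" for \<eta>
  proof -
    have "cmod (\<psi> \<eta>) \<le> Sup ?S" by (rule cSup_upper[OF _ bdd]) (use that in auto)
    thus ?thesis using sup by simp
  qed
  have tq: "ptrunc K \<xi> \<in> qpv p" by (rule ptrunc_in_qpv[OF \<xi>(1)])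
  have mv: "max 1 (vnorm p \<xi>) = max 1 (vnorm p (ptrunc K \<xi>))" by (rule max1_vnorm_ptrunc[OF \<xi>(1) assms(1)])
  show "max 1 (cmod (\<psi> \<xi>)) = max 1 (cmod (\<psi> (ptrunc K \<xi>)))"
  proof (cases "vnorm p \<xi> \<le> 1")
    case True
    hence "vnorm p (ptrunc K \<xi>) \<le> 1" using mv by linarith
    thus ?thesis using small[OF \<xi>(1) True] small[OF tq] by simp
  next
    case False
    hence "vnorm p (ptrunc K \<xi>) = vnorm p \<xi>" using mv by linarith
    hence "\<psi> \<xi> = \<psi> (ptrunc K \<xi>)" using rad \<xi>(1) tq unfolding radial_def by metis
    thus ?thesis by simp
  qed
qed

lemma weight_dominated_type1:
  fixes \<psi> :: "('n::finite \<Rightarrow> padic) \<Rightarrow> complex"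
  assumes "type1 p \<psi>"
  shows "weight_dominated p (vnorm p) (\<lambda>\<xi>. cmod (\<psi> \<xi>))"
  unfolding weight_dominated_def
proof
  fix l
  obtain C0 b0 where C0: "0 < C0" "0 < b0"
    and b: "\<forall>\<xi>\<in>qpv p. C0 * max 1 (vnorm p \<xi>) powr b0 \<le> max 1 (cmod (\<psi> \<xi>))"
    using assms unfolding type1_def by blast
  define m where "m = nat \<lceil>real l / b0\<rceil>"
  have "real l / b0 \<le> real m" unfolding m_def by linarith
  hence lm: "real l \<le> b0 * real m" using C0(2) by (simp add: field_simps)
  have "(max 1 (vnorm p \<xi>)) ^ l \<le> (1 / C0) ^ m * (max 1 (cmod (\<psi> \<xi>))) ^ m" if \<xi>: "\<xi> \<in> qpv p" for \<xi>
  proof -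
    define V where "V = max 1 (vnorm p \<xi>)"
    have V1: "1 \<le> V" unfolding V_def by simp
    have "V ^ l = V powr real l" using V1 by (simp add: powr_realpow)
    also have "\<dots> \<le> V powr (b0 * real m)" using V1 lm by (intro powr_mono) auto
    also have "\<dots> = (V powr b0) ^ m" using V1 by (simp add: powr_powr[symmetric] powr_realpow)
    also have "\<dots> \<le> (max 1 (cmod (\<psi> \<xi>)) / C0) ^ m"
      using b \<xi> C0(1) unfolding V_def by (intro power_mono) (auto simp: pos_le_divide_eq mult.commute)
    finally show ?thesis unfolding V_def by (simp add: power_divide)
  qed
  moreover have "0 \<le> (1 / C0) ^ m" using C0 by simp
  ultimately show "\<exists>m C. 0 \<le> C \<and> (\<forall>\<xi>\<in>qpv p. (max 1 (vnorm p \<xi>)) ^ l \<le> C * (max 1 (cmod (\<psi> \<xi>))) ^ m)"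
    by blast
qed

lemma weight_dominated_type2:
  fixes \<psi> :: "('n::finite \<Rightarrow> padic) \<Rightarrow> complex"
  assumes "type2 p \<psi>"
  shows "weight_dominated p (vnorm p) (\<lambda>\<xi>. cmod (\<psi> \<xi>))"
  unfolding weight_dominated_def
proof
  fix l
  have "\<exists>C>0. \<forall>\<xi>\<in>qpv p. max 1 (cmod (\<psi> \<xi>)) > C * max 1 (vnorm p \<xi>) powr (real l + 1)"
    using assms unfolding type2_def by simp
  then obtain C where C: "C > 0"
    and b: "\<forall>\<xi>\<in>qpv p. max 1 (cmod (\<psi> \<xi>)) > C * max 1 (vnorm p \<xi>) powr (real l + 1)"
    by blast
  have "(max 1 (vnorm p \<xi>)) ^ l \<le> 1 / C * (max 1 (cmod (\<psi> \<xi>))) ^ 1" if \<xi>: "\<xi> \<in> qpv p" for \<xi>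
  proof -
    define V where "V = max 1 (vnorm p \<xi>)"
    have V1: "1 \<le> V" unfolding V_def by simp
    have "V ^ l = V powr real l" using V1 by (simp add: powr_realpow)
    also have "\<dots> \<le> V powr (real l + 1)" using V1 by (intro powr_mono) auto
    also have "\<dots> \<le> max 1 (cmod (\<psi> \<xi>)) / C"
      using b \<xi> C unfolding V_def by (auto simp: pos_le_divide_eq mult.commute less_imp_le)
    finally show ?thesis unfolding V_def by simp
  qed
  moreover have "0 \<le> 1 / C" using C by simp
  ultimately show "\<exists>m C. 0 \<le> C \<and> (\<forall>\<xi>\<in>qpv p. (max 1 (vnorm p \<xi>)) ^ l \<le> C * (max 1 (cmod (\<psi> \<xi>))) ^ m)"
    by blast
qed

theorem lemma4p2:
  fixes p :: nat and \<psi> :: "('n::finite \<Rightarrow> padic) \<Rightarrow> complex"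
  assumes "prime p" and "admissible p \<psi>"
  shows "Binf p (\<lambda>\<xi>. cmod (\<psi> \<xi>)) \<subseteq> Binf p (vnorm p)
    \<and> (\<forall>F\<in>Binf p (\<lambda>\<xi>. cmod (\<psi> \<xi>)). \<forall>e>0. \<exists>d>0. \<forall>G\<in>Binf p (\<lambda>\<xi>. cmod (\<psi> \<xi>)).
          fdist p (\<lambda>\<xi>. cmod (\<psi> \<xi>)) F G < d \<longrightarrow> fdist p (vnorm p) F G < e)"
proof -
  have p1: "1 < p" using assms(1) by (rule prime_gt_1_nat)
  have w: "trunc_invariant p (vnorm p :: ('n \<Rightarrow> padic) \<Rightarrow> real)" "trunc_invariant p (\<lambda>\<xi>. cmod (\<psi> \<xi>))"
    using trunc_invariant_vnorm[of p] trunc_invariant_admissible[OF _ assms(2)] p1 by auto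
  have dom: "weight_dominated p (vnorm p) (\<lambda>\<xi>. cmod (\<psi> \<xi>))"
    using assms(2) weight_dominated_type1 weight_dominated_type2 unfolding admissible_def by blast
  show ?thesis
  proof (intro conjI ballI allI impI)
    show "Binf p (\<lambda>\<xi>. cmod (\<psi> \<xi>)) \<subseteq> Binf p (vnorm p)" by (rule Binf_mono_weight[OF p1 w dom])
    fix F e assume F: "F \<in> Binf p (\<lambda>\<xi>. cmod (\<psi> \<xi>))" and e: "(0::real) < e"
    show "\<exists>d>0. \<forall>G\<in>Binf p (\<lambda>\<xi>. cmod (\<psi> \<xi>)). fdist p (\<lambda>\<xi>. cmod (\<psi> \<xi>)) F G < d \<longrightarrow> fdist p (vnorm p) F G < e"
      by (rule fdist_uniformly_continuous[OF p1 w dom e]) (use F in blast)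
  qed
qed

end
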